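(* Fix $m\ge3$ and let $f$ be an axis rule on profiles over a candidate set $C$ with $|C|=m$ that is the scoring rule induced by $\mathrm{cost}(A,\triangleleft)=g(x_{A,\triangleleft})$ for a function $g:\{0,1\}^m\to\mathbb R_{\ge0}$ with $g(x)=0$ iff the ones of $x$ are contiguous and $g(x)=g(\overleftarrow{x})$ for all $x$. If $f$ satisfies ballot monotonicity, then there is a function $h$ such that for every ballot $A$ and axis $\triangleleft$ with $A$ not an interval of $\triangleleft$, $\mathrm{cost}(A,\triangleleft)=h(k_{\mathrm{app}},k_{\mathrm{int}})$, where $k_{\mathrm{app}}=|A|$ and $k_{\mathrm{int}}$ is the number of interfering candidates of $A$ on $\triangleleft$.
   Context: Let $C$ be a finite set of $m$ candidates. An approval ballot is a nonempty subset $A\subseteq C$; a profile is a finite sequence of ballots. An axis is a strict linear order $\triangleleft$ on $C$; $a\trianglelefteq b$ means $a\triangleleft b$ or $a=b$. A ballot $A$ is an interval of $\triangleleft$ if for all $a,b\in A$ and every $c$ with $a\triangleleft c\triangleleft b$ we have $c\in A$; a candidate $c\notin A$ with $a\triangleleft c\triangleleft b$ for some $a,b\in A$ is interfering. If $\triangleleft=c_1c_2\cdots c_m$, the approval vector $x_{A,\triangleleft}\in\{0,1\}^m$ has $i$-th entry $1$ iff $c_i\in A$; $\overleftarrow{x}$ denotes the reversed vector. The scoring rule induced by $\mathrm{cost}$ is $f(P)=\arg\min_{\triangleleft}\sum_{A\in P}\mathrm{cost}(A,\triangleleft)$. $f$ satisfies ballot monotonicity if for every profile $P$, ballot $A\in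 P$ and $\triangleleft\in f(P)$ such that $A$ is not an interval of $\triangleleft$, we have $\triangleleft\in f(P')$, where $P'$ replaces $A$ by $A'=\{x\in C:\exists y,z\in A,\ y\trianglelefteq x\trianglelefteq z\}$. *)

theory Defs
  imports Complex_Main
begin

text \<open>Candidates form a finite type 'c (so C = UNIV, m = CARD('c)).
An axis (strict linear order) c_1 c_2 ... c_m is represented as the list [c_1,...,c_m]
of all candidates without repetition.\<close>

definition is_axis :: "'c list \<Rightarrow> bool" where
  "is_axis ax \<longleftrightarrow> distinct ax \<and> set ax = UNIV"

definition axes :: "'c list set" where
  "axes = {ax. is_axis ax}"

definition axis_less :: "'c list \<Rightarrow> 'c \<Rightarrow> 'c \<Rightarrow> bool" where
  "axis_less ax a b \<longleftrightarrow> (\<exists>i j. i < j \<and> j < length ax \<and> ax ! i = a \<and> ax ! j = b)"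

definition axis_le :: "'c list \<Rightarrow> 'c \<Rightarrow> 'c \<Rightarrow> bool" where
  "axis_le ax a b \<longleftrightarrow> axis_less ax a b \<or> a = b"

definition is_interval :: "'c set \<Rightarrow> 'c list \<Rightarrow> bool" where
  "is_interval A ax \<longleftrightarrow>
     (\<forall>a\<in>A. \<forall>b\<in>A. \<forall>c. axis_less ax a c \<and> axis_less ax c b \<longrightarrow> c \<in> A)"

definition interfering :: "'c set \<Rightarrow> 'c list \<Rightarrow> 'c set" where
  "interfering A ax = {c. c \<notin> A \<and> (\<exists>a\<in>A. \<exists>b\<in>A. axis_less ax a c \<and> axis_less ax c b)}"

definition interval_hull :: "'c list \<Rightarrow> 'c set \<Rightarrow> 'c set" where
  "interval_hull ax A = {x. \<exists>y\<in>A. \<exists>z\<in>A. axis_le ax y x \<and> axis_le ax x z}"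

definition approval_vector :: "'c set \<Rightarrow> 'c list \<Rightarrow> bool list" where
  "approval_vector A ax = map (\<lambda>c. c \<in> A) ax"

definition contiguous_ones :: "bool list \<Rightarrow> bool" where
  "contiguous_ones x \<longleftrightarrow>
     (\<forall>i j k. i < j \<and> j < k \<and> k < length x \<and> x ! i \<and> x ! k \<longrightarrow> x ! j)"

definition is_ballot :: "'c set \<Rightarrow> bool" where
  "is_ballot A \<longleftrightarrow> A \<noteq> {}"

type_synonym 'c profile = "'c set list"

definition is_profile :: "'c profile \<Rightarrow> bool" where
  "is_profile P \<longleftrightarrow> (\<forall>A\<in>set P. is_ballot A)"

definition total_cost :: "('c set \<Rightarrow> 'c list \<Rightarrow> real) \<Rightarrow> 'c profile \<Rightarrow> 'c list \<Rightarrow> real" where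
  "total_cost cost P ax = (\<Sum>A\<leftarrow>P. cost A ax)"

definition scoring_rule :: "('c set \<Rightarrow> 'c list \<Rightarrow> real) \<Rightarrow> 'c profile \<Rightarrow> 'c list set" where
  "scoring_rule cost P =
     {ax \<in> axes. \<forall>ax' \<in> axes. total_cost cost P ax \<le> total_cost cost P ax'}"

definition ballot_monotone :: "('c profile \<Rightarrow> 'c list set) \<Rightarrow> bool" where
  "ballot_monotone f \<longleftrightarrow>
     (\<forall>P i ax. is_profile P \<and> i < length P \<and> ax \<in> f P \<and> \<not> is_interval (P ! i) ax \<longrightarrow>
        ax \<in> f (P[i := interval_hull ax (P ! i)]))"

end

theory Submission
  imports Defs
begin

definition axis_pos :: "'c list \<Rightarrow> 'c \<Rightarrow> nat" where
  "axis_pos ax c = (THE t. t < length ax \<and> ax ! t = c)"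

definition adjacent :: "'c list \<Rightarrow> 'c \<Rightarrow> 'c \<Rightarrow> bool" where
  "adjacent ax u v \<longleftrightarrow> axis_pos ax u = Suc (axis_pos ax v) \<or> axis_pos ax v = Suc (axis_pos ax u)"

definition axis_segment :: "'c list \<Rightarrow> nat \<Rightarrow> nat \<Rightarrow> 'c set" where
  "axis_segment ax lo hi = (!) ax ` {lo..hi}"

lemma length_axis: "is_axis (ax :: 'c::finite list) \<Longrightarrow> length ax = card (UNIV :: 'c set)"
  unfolding is_axis_def by (metis distinct_card)

lemma axis_nth_eq_iff:
  "is_axis ax \<Longrightarrow> s < length ax \<Longrightarrow> t < length ax \<Longrightarrow> ax ! s = ax ! t \<longleftrightarrow> s = t"
  unfolding is_axis_def by (simp add: nth_eq_iff_index_eq)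

lemma axis_pos_unique: "is_axis ax \<Longrightarrow> \<exists>!t. t < length ax \<and> ax ! t = c"
  unfolding is_axis_def by (intro distinct_Ex1) auto

lemma
  assumes "is_axis ax"
  shows axis_pos_less: "axis_pos ax c < length ax" and nth_axis_pos: "ax ! axis_pos ax c = c"
  using theI'[OF axis_pos_unique[OF assms]] unfolding axis_pos_def by blast+

lemma axis_pos_nth: "is_axis ax \<Longrightarrow> t < length ax \<Longrightarrow> axis_pos ax (ax ! t) = t"
  unfolding axis_pos_def by (intro the1_equality axis_pos_unique) auto

lemma axis_pos_eq_iff: "is_axis ax \<Longrightarrow> axis_pos ax a = axis_pos ax b \<longleftrightarrow> a = b"
  using nth_axis_pos by metis

lemma axis_less_iff:
  assumes ax: "is_axis ax"
  shows "axis_less ax a b \<longleftrightarrow> axis_pos ax a < axis_pos ax b"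
proof
  assume "axis_less ax a b"
  then obtain i j where "i < j" "j < length ax" "ax ! i = a" "ax ! j = b"
    unfolding axis_less_def by blast
  then show "axis_pos ax a < axis_pos ax b" using axis_pos_nth[OF ax] by auto
next
  assume "axis_pos ax a < axis_pos ax b"
  then show "axis_less ax a b"
    unfolding axis_less_def using axis_pos_less[OF ax] nth_axis_pos[OF ax] by blast
qed

lemma axis_le_iff: "is_axis ax \<Longrightarrow> axis_le ax a b \<longleftrightarrow> axis_pos ax a \<le> axis_pos ax b"
  unfolding axis_le_def order_le_less by (simp add: axis_less_iff axis_pos_eq_iff)

lemma is_interval_iff_pos:
  assumes ax: "is_axis ax"
  shows "is_interval S ax \<longleftrightarrow>
    (\<forall>a\<in>S. \<forall>b\<in>S. \<forall>t. axis_pos ax a < t \<and> t < axis_pos ax b \<longrightarrow> ax ! t \<in> S)"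
proof
  assume H: "is_interval S ax"
  show "\<forall>a\<in>S. \<forall>b\<in>S. \<forall>t. axis_pos ax a < t \<and> t < axis_pos ax b \<longrightarrow> ax ! t \<in> S"
  proof (intro ballI allI impI)
    fix a b t assume ab: "a \<in> S" "b \<in> S" and t: "axis_pos ax a < t \<and> t < axis_pos ax b"
    then have "t < length ax" using axis_pos_less[OF ax, of b] by simp
    then have "axis_less ax a (ax ! t)" "axis_less ax (ax ! t) b"
      using t by (simp_all add: axis_less_iff[OF ax] axis_pos_nth[OF ax])
    then show "ax ! t \<in> S" using H ab unfolding is_interval_def by blast
  qed
next
  assume H: "\<forall>a\<in>S. \<forall>b\<in>S. \<forall>t. axis_pos ax a < t \<and> t < axis_pos ax b \<longrightarrow> ax ! t \<in> S"
  show "is_interval S ax" unfolding is_interval_def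
  proof (intro ballI allI impI)
    fix a b c assume ab: "a \<in> S" "b \<in> S" and c: "axis_less ax a c \<and> axis_less ax c b"
    then have "axis_pos ax a < axis_pos ax c" "axis_pos ax c < axis_pos ax b"
      by (simp_all add: axis_less_iff[OF ax])
    then have "ax ! axis_pos ax c \<in> S" using H ab by blast
    then show "c \<in> S" using nth_axis_pos[OF ax, of c] by simp
  qed
qed

lemma length_approval_vector [simp]: "length (approval_vector S ax) = length ax"
  unfolding approval_vector_def by simp

lemma nth_approval_vector: "t < length ax \<Longrightarrow> approval_vector S ax ! t \<longleftrightarrow> ax ! t \<in> S"
  unfolding approval_vector_def by simp

lemma approval_vector_rev: "approval_vector S (rev ax) = rev (approval_vector S ax)"
  unfolding approval_vector_def by (simp add: rev_map)

lemma approval_vector_axis_pos: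
  assumes ax: "is_axis ax"
  shows "approval_vector S ax ! axis_pos ax c \<longleftrightarrow> c \<in> S"
  using nth_approval_vector[OF axis_pos_less[OF ax], of S c] nth_axis_pos[OF ax, of c] by simp

lemma contiguous_approval_vector_iff:
  assumes ax: "is_axis ax"
  shows "contiguous_ones (approval_vector S ax) \<longleftrightarrow> is_interval S ax"
proof
  assume H: "contiguous_ones (approval_vector S ax)"
  show "is_interval S ax" unfolding is_interval_iff_pos[OF ax]
  proof (intro ballI allI impI)
    fix a b t assume ab: "a \<in> S" "b \<in> S" and t: "axis_pos ax a < t \<and> t < axis_pos ax b"
    have "approval_vector S ax ! axis_pos ax a" "approval_vector S ax ! axis_pos ax b"
      using ab by (simp_all add: approval_vector_axis_pos[OF ax])
    moreover have "axis_pos ax b < length (approval_vector S ax)"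
      using axis_pos_less[OF ax] by simp
    ultimately have "approval_vector S ax ! t"
      using H t unfolding contiguous_ones_def by blast
    then show "ax ! t \<in> S"
      using t axis_pos_less[OF ax, of b] by (simp add: nth_approval_vector)
  qed
next
  assume H: "is_interval S ax"
  show "contiguous_ones (approval_vector S ax)" unfolding contiguous_ones_def
  proof (intro allI impI)
    fix i j k assume ijk: "i < j \<and> j < k \<and> k < length (approval_vector S ax)
      \<and> approval_vector S ax ! i \<and> approval_vector S ax ! k"
    then have "ax ! i \<in> S" "ax ! k \<in> S"
      using nth_approval_vector[of i ax S] nth_approval_vector[of k ax S] by auto
    moreover have "axis_pos ax (ax ! i) < j" "j < axis_pos ax (ax ! k)"
      using ijk by (simp_all add: axis_pos_nth[OF ax])
    ultimately have "ax ! j \<in> S" using H unfolding is_interval_iff_pos[OF ax] by blast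
    then show "approval_vector S ax ! j" using ijk by (simp add: nth_approval_vector)
  qed
qed

lemma axes_same_length: "is_axis (ax :: 'c list) \<Longrightarrow> is_axis (ax' :: 'c list) \<Longrightarrow> length ax = length ax'"
  unfolding is_axis_def using distinct_card[of ax] distinct_card[of ax'] by simp

lemma axis_nonempty: "is_axis ax \<Longrightarrow> 0 < length ax"
  unfolding is_axis_def by auto

lemma axis_segment_Suc: "axis_segment ax t (Suc t) = {ax ! t, ax ! Suc t}"
proof -
  have "{t..Suc t} = {t, Suc t}" by auto
  then show ?thesis unfolding axis_segment_def by simp
qed

lemma axis_segment_insert_lo:
  "lo \<le> hi \<Longrightarrow> axis_segment ax lo hi = insert (ax ! lo) (axis_segment ax (Suc lo) hi)"
  unfolding axis_segment_def by (simp add: Icc_eq_insert_lb_nat)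

lemma axis_segment_insert_hi:
  "lo \<le> Suc hi \<Longrightarrow> axis_segment ax lo (Suc hi) = insert (ax ! Suc hi) (axis_segment ax lo hi)"
  unfolding axis_segment_def by (simp add: atLeastAtMostSuc_conv)

lemma axis_pos_in_segment:
  assumes ax: "is_axis ax" and hi: "hi < length ax"
  shows "c \<in> axis_segment ax lo hi \<longleftrightarrow> lo \<le> axis_pos ax c \<and> axis_pos ax c \<le> hi"
proof
  assume "c \<in> axis_segment ax lo hi"
  then obtain t where "c = ax ! t" "lo \<le> t" "t \<le> hi" unfolding axis_segment_def by auto
  then show "lo \<le> axis_pos ax c \<and> axis_pos ax c \<le> hi" using hi axis_pos_nth[OF ax, of t] by simp
next
  assume "lo \<le> axis_pos ax c \<and> axis_pos ax c \<le> hi"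
  then have "ax ! axis_pos ax c \<in> axis_segment ax lo hi" unfolding axis_segment_def by simp
  then show "c \<in> axis_segment ax lo hi" using nth_axis_pos[OF ax, of c] by simp
qed

lemma is_interval_axis_segment:
  assumes ax: "is_axis ax" and hi: "hi < length ax"
  shows "is_interval (axis_segment ax lo hi) ax"
  unfolding is_interval_iff_pos[OF ax]
proof (intro ballI allI impI)
  fix a b t assume "a \<in> axis_segment ax lo hi" "b \<in> axis_segment ax lo hi"
    and t: "axis_pos ax a < t \<and> t < axis_pos ax b"
  then have "lo \<le> axis_pos ax a" "axis_pos ax b \<le> hi" using axis_pos_in_segment[OF ax hi] by auto
  then have "lo \<le> t" "t \<le> hi" using t by simp_all
  then show "ax ! t \<in> axis_segment ax lo hi" unfolding axis_segment_def by simp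
qed

lemma not_interval_of_gap:
  assumes ax: "is_axis ax" and "p1 < p2" "p2 < p3" "p3 < length ax"
    and "ax ! p1 \<in> B" "ax ! p3 \<in> B" "ax ! p2 \<notin> B"
  shows "\<not> is_interval B ax"
proof
  assume "is_interval B ax"
  moreover have "axis_pos ax (ax ! p1) < p2" "p2 < axis_pos ax (ax ! p3)"
    using assms axis_pos_nth[OF ax] by simp_all
  ultimately show False using assms unfolding is_interval_iff_pos[OF ax] by blast
qed

lemma adjacent_sym: "adjacent ax u v \<longleftrightarrow> adjacent ax v u"
  unfolding adjacent_def by auto

lemma adjacent_of_interval_pair:
  assumes ax: "is_axis ax" and "u \<noteq> v" and iv: "is_interval {u, v} ax"
  shows "adjacent ax u v"
proof -
  have gap: "\<not> Suc (axis_pos ax a) < axis_pos ax b" if uv: "a = u \<and> b = v \<or> a = v \<and> b = u" for a b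
  proof
    assume lt: "Suc (axis_pos ax a) < axis_pos ax b"
    let ?t = "Suc (axis_pos ax a)"
    have t: "?t < length ax" using lt axis_pos_less[OF ax, of b] by simp
    then have "ax ! ?t \<noteq> a" "ax ! ?t \<noteq> b"
      using lt axis_pos_nth[OF ax t] by auto
    then have "ax ! ?t \<notin> {u, v}" using uv by auto
    moreover have "ax ! axis_pos ax a \<in> {u, v}" "ax ! axis_pos ax b \<in> {u, v}"
      using uv nth_axis_pos[OF ax, of a] nth_axis_pos[OF ax, of b] by auto
    ultimately have "\<not> is_interval {u, v} ax"
      by (intro not_interval_of_gap[OF ax lessI lt axis_pos_less[OF ax]])
    then show False using iv by contradiction
  qed
  have "axis_pos ax u \<noteq> axis_pos ax v" using \<open>u \<noteq> v\<close> axis_pos_eq_iff[OF ax] by simp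
  then show ?thesis
    using gap[of u v] gap[of v u] unfolding adjacent_def by auto
qed

lemma involution_image_eq:
  assumes inv: "\<And>t. f (f t) = t" and "f ` S \<subseteq> T" and "f ` T \<subseteq> S"
  shows "f ` S = T"
proof
  show "T \<subseteq> f ` S"
  proof
    fix t assume "t \<in> T"
    then have "f t \<in> S" using assms(3) by blast
    then show "t \<in> f ` S" using inv[of t] by force
  qed
qed fact

definition segment_reflect :: "nat \<Rightarrow> nat \<Rightarrow> nat \<Rightarrow> nat" where
  "segment_reflect i j t = (if i \<le> t \<and> t \<le> j then i + j - t else t)"

definition rev_segment :: "nat \<Rightarrow> nat \<Rightarrow> 'a list \<Rightarrow> 'a list" where
  "rev_segment i j xs = map (\<lambda>t. xs ! segment_reflect i j t) [0..<length xs]"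

lemma segment_reflect_segment_reflect [simp]: "segment_reflect i j (segment_reflect i j t) = t"
  unfolding segment_reflect_def by auto

lemma inj_segment_reflect: "inj_on (segment_reflect i j) P"
  by (metis inj_on_inverseI segment_reflect_segment_reflect)

lemma segment_reflect_less: "j < n \<Longrightarrow> t < n \<Longrightarrow> segment_reflect i j t < n"
  unfolding segment_reflect_def by auto

lemma segment_reflect_image_lessThan: "j < n \<Longrightarrow> segment_reflect i j ` {..<n} = {..<n}"
  by (rule involution_image_eq) (auto simp: segment_reflect_less)

lemma length_rev_segment [simp]: "length (rev_segment i j xs) = length xs"
  unfolding rev_segment_def by simp

lemma nth_rev_segment: "t < length xs \<Longrightarrow> rev_segment i j xs ! t = xs ! segment_reflect i j t"
  unfolding rev_segment_def by simp

lemma rev_segment_rev_segment: "j < length xs \<Longrightarrow> rev_segment i j (rev_segment i j xs) = xs"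
  by (rule nth_equalityI) (auto simp: nth_rev_segment segment_reflect_less)

lemma rev_segment_whole: "rev_segment 0 (length xs - 1) xs = rev xs"
  by (rule nth_equalityI) (auto simp: nth_rev_segment segment_reflect_def rev_nth)

lemma approval_vector_rev_segment:
  "j < length ax \<Longrightarrow> approval_vector S (rev_segment i j ax) = rev_segment i j (approval_vector S ax)"
  unfolding approval_vector_def
  by (rule nth_equalityI) (auto simp: nth_rev_segment segment_reflect_less)

lemma is_axis_rev_segment:
  assumes ax: "is_axis ax" and j: "j < length ax"
  shows "is_axis (rev_segment i j ax)"
proof -
  let ?idx = "map (segment_reflect i j) [0..<length ax]"
  have idx: "rev_segment i j ax = map ((!) ax) ?idx"
    unfolding rev_segment_def by simp
  have set_idx: "set ?idx = {..<length ax}"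
    using segment_reflect_image_lessThan[OF j] by (simp add: atLeast0LessThan)
  have "distinct ?idx" by (simp add: distinct_map inj_segment_reflect)
  moreover have "inj_on ((!) ax) (set ?idx)"
    using axis_nth_eq_iff[OF ax] set_idx by (auto intro: inj_onI)
  moreover have "set ax = (!) ax ` set ?idx"
    using set_idx by (auto simp: in_set_conv_nth)
  ultimately have "distinct (map ((!) ax) ?idx)" "set (map ((!) ax) ?idx) = set ax"
    using distinct_map[of "(!) ax" ?idx] by (simp_all add: image_image)
  then show ?thesis using ax unfolding is_axis_def idx by simp
qed

lemma segment_reflect_image_outside:
  assumes "hi < i \<or> j < lo \<or> (lo \<le> i \<and> j \<le> hi)"
  shows "segment_reflect i j ` {lo..hi} = {lo..hi}"
  by (rule involution_image_eq) (use assms in \<open>auto simp: segment_reflect_def\<close>)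

lemma segment_reflect_image_inside:
  assumes "i \<le> lo" "lo \<le> hi" "hi \<le> j"
  shows "segment_reflect i j ` {lo..hi} = {i + j - hi..i + j - lo}"
proof (rule involution_image_eq)
  show "segment_reflect i j ` {lo..hi} \<subseteq> {i + j - hi..i + j - lo}"
    using assms by (auto simp: segment_reflect_def)
  show "segment_reflect i j ` {i + j - hi..i + j - lo} \<subseteq> {lo..hi}"
  proof
    fix t assume "t \<in> segment_reflect i j ` {i + j - hi..i + j - lo}"
    then obtain s where "i + j - hi \<le> s" "s \<le> i + j - lo" "t = segment_reflect i j s" by auto
    moreover have "i \<le> s" "s \<le> j" "lo \<le> i + j - s" "i + j - s \<le> hi"
      using calculation assms by linarith+
    ultimately show "t \<in> {lo..hi}" by (simp add: segment_reflect_def)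
  qed
qed simp

lemma axis_segment_rev_segment:
  assumes "hi < length xs"
  shows "axis_segment (rev_segment i j xs) lo hi = (!) xs ` segment_reflect i j ` {lo..hi}"
proof -
  have "rev_segment i j xs ! t = xs ! segment_reflect i j t" if "t \<in> {lo..hi}" for t
    using that assms by (simp add: nth_rev_segment)
  then show ?thesis unfolding axis_segment_def image_image by (rule image_cong[OF refl])
qed

lemma is_interval_rev_segment_axis_segment:
  assumes ax: "is_axis ax" and "lo \<le> hi" "hi < length ax" "j < length ax"
    and pos: "hi < i \<or> j < lo \<or> (lo \<le> i \<and> j \<le> hi) \<or> (i \<le> lo \<and> hi \<le> j)"
  shows "is_interval (axis_segment ax lo hi) (rev_segment i j ax)"
proof -
  have ax2: "is_axis (rev_segment i j ax)" using is_axis_rev_segment[OF ax \<open>j < length ax\<close>] .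
  from pos consider "hi < i \<or> j < lo \<or> (lo \<le> i \<and> j \<le> hi)" | "i \<le> lo" "hi \<le> j" by blast
  then show ?thesis
  proof cases
    case 1
    have "axis_segment (rev_segment i j ax) lo hi = axis_segment ax lo hi"
      unfolding axis_segment_rev_segment[OF \<open>hi < length ax\<close>] segment_reflect_image_outside[OF 1]
      by (simp add: axis_segment_def)
    then show ?thesis using is_interval_axis_segment[OF ax2, of hi lo] assms by simp
  next
    case 2
    have hi': "i + j - lo < length ax" using 2 assms by linarith
    have "segment_reflect i j ` {i + j - hi..i + j - lo} = {lo..hi}"
      using segment_reflect_image_inside[of i "i + j - hi" "i + j - lo" j] 2 assms by simp
    then have "axis_segment (rev_segment i j ax) (i + j - hi) (i + j - lo) = axis_segment ax lo hi"
      unfolding axis_segment_rev_segment[OF hi'] by (simp add: axis_segment_def)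
    then show ?thesis using is_interval_axis_segment[OF ax2, of "i + j - lo" "i + j - hi"] hi'
      by simp
  qed
qed

lemma unit_steps_same_direction:
  fixes q :: "nat \<Rightarrow> nat"
  assumes "\<And>t. lo \<le> t \<Longrightarrow> t < hi \<Longrightarrow> q (Suc t) = Suc (q t) \<or> q t = Suc (q (Suc t))"
    and inj: "inj_on q {lo..hi}" and "lo \<le> t" "t < hi"
  shows "q (Suc t) = Suc (q t) \<longleftrightarrow> q (Suc lo) = Suc (q lo)"
  using \<open>lo \<le> t\<close> \<open>t < hi\<close>
proof (induction t rule: dec_induct)
  case base
  then show ?case by simp
next
  case (step t)
  have "q (Suc (Suc t)) \<noteq> q t"
    using inj_onD[OF inj, of "Suc (Suc t)" t] step.hyps step.prems by auto
  moreover have "q (Suc t) = Suc (q t) \<or> q t = Suc (q (Suc t))"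
    by (rule assms(1)) (use step in auto)
  moreover have "q (Suc (Suc t)) = Suc (q (Suc t)) \<or> q (Suc t) = Suc (q (Suc (Suc t)))"
    by (rule assms(1)) (use step in auto)
  ultimately have "q (Suc (Suc t)) = Suc (q (Suc t)) \<longleftrightarrow> q (Suc t) = Suc (q t)" by presburger
  then show ?case using step.IH step.prems by simp
qed

lemma unit_steps_inj_on_linear:
  fixes q :: "nat \<Rightarrow> nat"
  assumes unit: "\<And>t. lo \<le> t \<Longrightarrow> t < hi \<Longrightarrow> q (Suc t) = Suc (q t) \<or> q t = Suc (q (Suc t))"
    and inj: "inj_on q {lo..hi}"
  shows "(\<forall>t\<in>{lo..hi}. q t = q lo + (t - lo)) \<or> (\<forall>t\<in>{lo..hi}. q t + (t - lo) = q lo)"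
proof -
  have same: "q (Suc t) = Suc (q t) \<longleftrightarrow> q (Suc lo) = Suc (q lo)" if "lo \<le> t" "Suc t \<le> hi" for t
    using unit_steps_same_direction[OF assms that(1)] that(2) by simp
  have unit_at: "q (Suc t) = Suc (q t) \<or> q t = Suc (q (Suc t))" if "lo \<le> t" "Suc t \<le> hi" for t
    using unit[OF that(1)] that(2) by simp
  show ?thesis
  proof (cases "q (Suc lo) = Suc (q lo)")
    case True
    have "q t = q lo + (t - lo)" if "lo \<le> t" "t \<le> hi" for t
      using that
    proof (induction t rule: dec_induct)
      case (step t)
      then show ?case using same[OF step.hyps(1) step.prems] True by simp
    qed simp
    then show ?thesis unfolding Ball_def atLeastAtMost_iff by blast
  next
    case False
    have "q t + (t - lo) = q lo" if "lo \<le> t" "t \<le> hi" for t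
      using that
    proof (induction t rule: dec_induct)
      case (step t)
      then show ?case using same[OF step.hyps(1) step.prems] unit_at[OF step.hyps(1) step.prems] False
        by auto
    qed simp
    then show ?thesis unfolding Ball_def atLeastAtMost_iff by blast
  qed
qed

lemma axis_eq_or_rev_of_adjacent:
  assumes ax: "is_axis ax" and ax': "is_axis ax'"
    and adj: "\<And>t. Suc t < length ax' \<Longrightarrow> adjacent ax (ax' ! t) (ax' ! Suc t)"
  shows "ax = ax' \<or> ax = rev ax'"
proof -
  define n where "n = length ax'"
  define q where "q t = axis_pos ax (ax' ! t)" for t
  have len: "length ax = n" using axes_same_length[OF ax ax'] n_def by simp
  have q_less: "q t < n" for t using axis_pos_less[OF ax] len unfolding q_def by simp
  have nth_q: "ax ! q t = ax' ! t" for t using nth_axis_pos[OF ax] unfolding q_def by simp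
  have "q (Suc t) = Suc (q t) \<or> q t = Suc (q (Suc t))" if "0 \<le> t" "t < n - 1" for t
    using adj[of t] that unfolding adjacent_def q_def n_def by auto
  moreover have "inj_on q {0..n - 1}"
  proof (rule inj_onI)
    fix a b assume ab: "a \<in> {0..n - 1}" "b \<in> {0..n - 1}" "q a = q b"
    have "0 < n" using axis_nonempty[OF ax'] n_def by simp
    then have "a < n" "b < n" using ab by auto
    moreover have "ax' ! a = ax' ! b" using nth_q[of a] nth_q[of b] ab(3) by simp
    ultimately show "a = b" using axis_nth_eq_iff[OF ax'] n_def by simp
  qed
  ultimately have "(\<forall>t\<in>{0..n - 1}. q t = q 0 + (t - 0)) \<or> (\<forall>t\<in>{0..n - 1}. q t + (t - 0) = q 0)"
    by (rule unit_steps_inj_on_linear)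
  then consider (up) "\<forall>t\<in>{0..n - 1}. q t = q 0 + t" | (down) "\<forall>t\<in>{0..n - 1}. q t + t = q 0"
    unfolding diff_zero by blast
  then show ?thesis
  proof cases
    case up
    have "q 0 = 0" using q_less[of "n - 1"] up[rule_format, of "n - 1"] by simp
    have "ax = ax'"
    proof (rule nth_equalityI)
      show "length ax = length ax'" using len n_def by simp
      fix t assume "t < length ax"
      then have "q t = t" using up[rule_format, of t] \<open>q 0 = 0\<close> len by simp
      then show "ax ! t = ax' ! t" using nth_q[of t] by simp
    qed
    then show ?thesis ..
  next
    case down
    have "q 0 = n - 1" using q_less[of 0] down[rule_format, of "n - 1"] by simp
    have "ax = rev ax'"
    proof (rule nth_equalityI)
      show "length ax = length (rev ax')" using len n_def by simp
      fix t assume t: "t < length ax"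
      moreover have "q (n - 1 - t) + (n - 1 - t) = q 0" using down by simp
      ultimately have "q (n - 1 - t) = t" using \<open>q 0 = n - 1\<close> len by linarith
      then show "ax ! t = rev ax' ! t" using nth_q[of "n - 1 - t"] t len n_def by (simp add: rev_nth)
    qed
    then show ?thesis ..
  qed
qed

lemma is_intervalD_pos:
  assumes "is_axis ax" "is_interval S ax" "a \<in> S" "b \<in> S" "axis_pos ax a < t" "t < axis_pos ax b"
  shows "ax ! t \<in> S"
  using assms is_interval_iff_pos by blast

lemma axis_pos_next_to_segment:
  assumes ax: "is_axis ax" and hi: "hi < length ax" and "lo \<le> hi"
    and d: "d \<notin> axis_segment ax lo hi" and iv: "is_interval (insert d (axis_segment ax lo hi)) ax"
  shows "Suc (axis_pos ax d) = lo \<or> axis_pos ax d = Suc hi"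
proof (rule ccontr)
  let ?S = "axis_segment ax lo hi" and ?p = "axis_pos ax d"
  assume far: "\<not> (Suc ?p = lo \<or> ?p = Suc hi)"
  have ends: "ax ! lo \<in> insert d ?S" "ax ! hi \<in> insert d ?S"
    using \<open>lo \<le> hi\<close> unfolding axis_segment_def by auto
  have pos_ends: "axis_pos ax (ax ! lo) = lo" "axis_pos ax (ax ! hi) = hi"
    using hi \<open>lo \<le> hi\<close> axis_pos_nth[OF ax] by simp_all
  have "?p < lo \<or> hi < ?p" using d axis_pos_in_segment[OF ax hi] by auto
  then show False
  proof
    assume "?p < lo"
    then have lt: "Suc ?p < lo" using far by simp
    have "ax ! Suc ?p \<in> insert d ?S"
      using is_intervalD_pos[OF ax iv insertI1 ends(1)] lt pos_ends by simp
    moreover have "axis_pos ax (ax ! Suc ?p) = Suc ?p"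
      using lt hi \<open>lo \<le> hi\<close> axis_pos_nth[OF ax] by simp
    ultimately show False using lt axis_pos_in_segment[OF ax hi] by auto
  next
    assume "hi < ?p"
    then have lt: "Suc hi < ?p" using far by simp
    have "ax ! Suc hi \<in> insert d ?S"
      using is_intervalD_pos[OF ax iv ends(2) insertI1] lt pos_ends by simp
    moreover have "axis_pos ax (ax ! Suc hi) = Suc hi"
      using lt axis_pos_less[OF ax, of d] axis_pos_nth[OF ax] by simp
    ultimately show False using lt axis_pos_in_segment[OF ax hi] by auto
  qed
qed

lemma image_atLeastAtMost_ascending:
  fixes q :: "nat \<Rightarrow> nat"
  assumes "i \<le> j" and up: "\<forall>t\<in>{i..j}. q t = q i + (t - i)"
  shows "q ` {i..j} = {q i..q j}"
proof -
  have qj: "q j = q i + (j - i)" using up[rule_format, of j] assms(1) by simp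
  show ?thesis
  proof (intro equalityI subsetI)
    fix s assume "s \<in> q ` {i..j}"
    then obtain t where t: "t \<in> {i..j}" "s = q t" by blast
    then show "s \<in> {q i..q j}" using up[rule_format, OF t(1)] qj by auto
  next
    fix s assume s: "s \<in> {q i..q j}"
    then have t: "i + (s - q i) \<in> {i..j}" using qj assms(1) by auto
    then have "q (i + (s - q i)) = s" using up[rule_format, OF t] s by auto
    then show "s \<in> q ` {i..j}" using t by (metis imageI)
  qed
qed

lemma image_atLeastAtMost_descending:
  fixes q :: "nat \<Rightarrow> nat"
  assumes "i \<le> j" and down: "\<forall>t\<in>{i..j}. q t + (t - i) = q i"
  shows "q ` {i..j} = {q j..q i}"
proof (intro equalityI subsetI)
  fix s assume "s \<in> q ` {i..j}"
  then obtain t where t: "t \<in> {i..j}" "s = q t" by blast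
  then have "q t + (t - i) = q i" using down by blast
  moreover have "q j + (j - i) = q i" using down assms(1) by auto
  ultimately show "s \<in> {q j..q i}" using t by auto
next
  fix s assume s: "s \<in> {q j..q i}"
  have qj: "q j + (j - i) = q i" using down assms(1) by auto
  moreover have "q j \<le> s" "s \<le> q i" using s by auto
  ultimately have "q i - s \<le> j - i" by arith
  then have "i + (q i - s) \<in> {i..j}" using assms(1) by auto
  moreover have "q (i + (q i - s)) = s" using down[rule_format, OF calculation] s qj by auto
  ultimately show "s \<in> q ` {i..j}" by (metis imageI)
qed

lemma axis_segment_of_adjacent_chain:
  assumes ax: "is_axis ax" and ax1: "is_axis ax1" and "i \<le> j" "j < length ax1"
    and adj: "\<And>t. i \<le> t \<Longrightarrow> t < j \<Longrightarrow> adjacent ax (ax1 ! t) (ax1 ! Suc t)"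
  shows "axis_segment ax1 i j = axis_segment ax
    (min (axis_pos ax (ax1 ! i)) (axis_pos ax (ax1 ! j))) (max (axis_pos ax (ax1 ! i)) (axis_pos ax (ax1 ! j)))"
proof -
  define q where "q t = axis_pos ax (ax1 ! t)" for t
  have nth_q: "ax ! q t = ax1 ! t" for t using nth_axis_pos[OF ax] unfolding q_def by simp
  have "q (Suc t) = Suc (q t) \<or> q t = Suc (q (Suc t))" if "i \<le> t" "t < j" for t
    using adj[OF that] unfolding adjacent_def q_def by auto
  moreover have "inj_on q {i..j}"
  proof (rule inj_onI)
    fix a b assume ab: "a \<in> {i..j}" "b \<in> {i..j}" "q a = q b"
    then have "ax1 ! a = ax1 ! b" using nth_q[of a] nth_q[of b] by simp
    then show "a = b" using ab axis_nth_eq_iff[OF ax1] \<open>j < length ax1\<close> by simp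
  qed
  ultimately have "(\<forall>t\<in>{i..j}. q t = q i + (t - i)) \<or> (\<forall>t\<in>{i..j}. q t + (t - i) = q i)"
    by (rule unit_steps_inj_on_linear)
  then have image: "q ` {i..j} = {min (q i) (q j)..max (q i) (q j)}"
  proof
    assume up: "\<forall>t\<in>{i..j}. q t = q i + (t - i)"
    have "q i \<le> q j" using up[rule_format, of j] \<open>i \<le> j\<close> by simp
    then show ?thesis using image_atLeastAtMost_ascending[OF \<open>i \<le> j\<close> up] by simp
  next
    assume down: "\<forall>t\<in>{i..j}. q t + (t - i) = q i"
    have "q j \<le> q i" using down[rule_format, of j] \<open>i \<le> j\<close> by simp
    then show ?thesis using image_atLeastAtMost_descending[OF \<open>i \<le> j\<close> down] by simp
  qed
  have "axis_segment ax1 i j = (\<lambda>t. ax ! q t) ` {i..j}"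
    unfolding axis_segment_def nth_q by (rule refl)
  also have "\<dots> = (!) ax ` (q ` {i..j})"
    by (rule image_image[symmetric])
  also have "\<dots> = axis_segment ax (min (q i) (q j)) (max (q i) (q j))"
    by (simp only: image axis_segment_def)
  finally show ?thesis unfolding q_def .
qed

lemma rev_segment_consecutive:
  assumes "i < j" "j < length xs" "Suc t < length xs"
    and sym: "\<And>u v. R u v \<Longrightarrow> R v u"
    and steady: "\<And>s. Suc s < length xs \<Longrightarrow> Suc s < i \<or> j < s \<or> (i \<le> s \<and> s < j) \<Longrightarrow>
      R (xs ! s) (xs ! Suc s)"
    and left: "0 < i \<Longrightarrow> R (xs ! (i - 1)) (xs ! j)"
    and right: "Suc j < length xs \<Longrightarrow> R (xs ! i) (xs ! Suc j)"
  shows "R (rev_segment i j xs ! t) (rev_segment i j xs ! Suc t)"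
proof -
  have nth: "rev_segment i j xs ! t = xs ! segment_reflect i j t"
    "rev_segment i j xs ! Suc t = xs ! segment_reflect i j (Suc t)"
    using assms(3) by (simp_all add: nth_rev_segment)
  consider "Suc t < i \<or> j < t" | "Suc t = i" | "i \<le> t \<and> t < j" | "t = j" by linarith
  then show ?thesis
  proof cases
    case 1
    then show ?thesis using steady[of t] assms(3) unfolding nth segment_reflect_def by auto
  next
    case 2
    then show ?thesis using left assms(1) unfolding nth segment_reflect_def by auto
  next
    case 3
    define s where "s = i + j - Suc t"
    have refl: "segment_reflect i j t = Suc s" "segment_reflect i j (Suc t) = s"
      and "i \<le> s" "s < j"
      using 3 unfolding s_def segment_reflect_def by auto
    then have "R (xs ! s) (xs ! Suc s)" using steady[of s] assms(2) by simp
    then have "R (xs ! Suc s) (xs ! s)" by (rule sym)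
    then show ?thesis unfolding nth refl .
  next
    case 4
    then show ?thesis using right assms(1,3) unfolding nth segment_reflect_def by auto
  qed
qed

lemma outer_neighbours:
  fixes a b d1 d2 :: nat
  assumes "a \<noteq> b"
    and "P1 \<Longrightarrow> Suc d1 = min a b \<or> d1 = Suc (max a b)"
    and "P2 \<Longrightarrow> Suc d2 = min a b \<or> d2 = Suc (max a b)"
    and "P1 \<Longrightarrow> P2 \<Longrightarrow> d1 \<noteq> d2"
  shows "((P1 \<longrightarrow> d1 = Suc a \<or> a = Suc d1) \<and> (P2 \<longrightarrow> b = Suc d2 \<or> d2 = Suc b))
       \<or> ((P1 \<longrightarrow> d1 = Suc b \<or> b = Suc d1) \<and> (P2 \<longrightarrow> a = Suc d2 \<or> d2 = Suc a))"
  using assms by (cases "a < b"; cases P1; cases P2) (auto simp: min_def max_def)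

lemma axis_respecting_common_intervals:
  assumes ax1: "is_axis ax1" and ij: "i < j" "j < length ax1" and ax: "is_axis ax"
    and common: "\<And>S. S \<noteq> {} \<Longrightarrow> is_interval S ax1 \<Longrightarrow> is_interval S (rev_segment i j ax1) \<Longrightarrow>
      is_interval S ax"
  shows "ax = ax1 \<or> ax = rev ax1 \<or> ax = rev_segment i j ax1 \<or> ax = rev (rev_segment i j ax1)"
proof -
  define n where "n = length ax1"
  define q where "q t = axis_pos ax (ax1 ! t)" for t
  have segment: "is_interval (axis_segment ax1 lo hi) ax"
    if "lo \<le> hi" "hi < n" "hi < i \<or> j < lo \<or> (lo \<le> i \<and> j \<le> hi) \<or> (i \<le> lo \<and> hi \<le> j)" for lo hi
  proof (rule common)
    show "axis_segment ax1 lo hi \<noteq> {}" using that(1) unfolding axis_segment_def by simp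
    show "is_interval (axis_segment ax1 lo hi) ax1"
      using is_interval_axis_segment[OF ax1] that n_def by simp
    show "is_interval (axis_segment ax1 lo hi) (rev_segment i j ax1)"
      using is_interval_rev_segment_axis_segment[OF ax1] that ij n_def by simp
  qed
  have steady: "adjacent ax (ax1 ! s) (ax1 ! Suc s)"
    if "Suc s < n" "Suc s < i \<or> j < s \<or> (i \<le> s \<and> s < j)" for s
  proof (rule adjacent_of_interval_pair[OF ax])
    show "ax1 ! s \<noteq> ax1 ! Suc s" using axis_nth_eq_iff[OF ax1] that n_def by simp
    show "is_interval {ax1 ! s, ax1 ! Suc s} ax"
      using segment[of s "Suc s"] that unfolding axis_segment_Suc by auto
  qed
  define lo where "lo = min (q i) (q j)"
  define hi where "hi = max (q i) (q j)"
  have block: "axis_segment ax1 i j = axis_segment ax lo hi"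
    unfolding lo_def hi_def q_def using ij n_def steady
    by (intro axis_segment_of_adjacent_chain[OF ax ax1]) auto
  have hi_less: "hi < length ax" using axis_pos_less[OF ax] unfolding hi_def q_def by (simp add: max_def)
  have "lo \<le> hi" unfolding lo_def hi_def by simp
  have outside: "ax1 ! t \<notin> axis_segment ax lo hi" if "t < n" "t < i \<or> j < t" for t
  proof
    assume "ax1 ! t \<in> axis_segment ax lo hi"
    then have "ax1 ! t \<in> axis_segment ax1 i j" using block by simp
    then obtain s where "s \<in> {i..j}" "ax1 ! t = ax1 ! s" unfolding axis_segment_def by auto
    then show False using axis_nth_eq_iff[OF ax1] that ij n_def by auto
  qed
  have left: "Suc (q (i - 1)) = lo \<or> q (i - 1) = Suc hi" if "0 < i"
  proof -
    have "insert (ax1 ! (i - 1)) (axis_segment ax lo hi) = axis_segment ax1 (i - 1) j"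
      using block axis_segment_insert_lo[of "i - 1" j ax1] that ij by simp
    then have "is_interval (insert (ax1 ! (i - 1)) (axis_segment ax lo hi)) ax"
      using segment[of "i - 1" j] ij n_def by simp
    then show ?thesis
      using axis_pos_next_to_segment[OF ax hi_less \<open>lo \<le> hi\<close>] outside[of "i - 1"] ij n_def that
      unfolding q_def by simp
  qed
  have right: "Suc (q (Suc j)) = lo \<or> q (Suc j) = Suc hi" if "Suc j < n"
  proof -
    have "insert (ax1 ! Suc j) (axis_segment ax lo hi) = axis_segment ax1 i (Suc j)"
      using block axis_segment_insert_hi[of i j ax1] ij by simp
    then have "is_interval (insert (ax1 ! Suc j) (axis_segment ax lo hi)) ax"
      using segment[of i "Suc j"] ij that by simp
    then show ?thesis
      using axis_pos_next_to_segment[OF ax hi_less \<open>lo \<le> hi\<close>] outside[of "Suc j"] that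
      unfolding q_def by simp
  qed
  have q_eq_iff: "q s = q t \<longleftrightarrow> s = t" if "s < n" "t < n" for s t
    using axis_pos_eq_iff[OF ax] axis_nth_eq_iff[OF ax1] that n_def unfolding q_def by simp
  have "q i \<noteq> q j" using q_eq_iff ij n_def by simp
  moreover have "q (i - 1) \<noteq> q (Suc j)" if "0 < i" "Suc j < n"
    using q_eq_iff that ij by simp
  ultimately have "((0 < i \<longrightarrow> adjacent ax (ax1 ! (i - 1)) (ax1 ! i))
        \<and> (Suc j < n \<longrightarrow> adjacent ax (ax1 ! j) (ax1 ! Suc j)))
      \<or> ((0 < i \<longrightarrow> adjacent ax (ax1 ! (i - 1)) (ax1 ! j))
        \<and> (Suc j < n \<longrightarrow> adjacent ax (ax1 ! i) (ax1 ! Suc j)))"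
    using outer_neighbours[of "q i" "q j" "0 < i" "q (i - 1)" "Suc j < n" "q (Suc j)"] left right
    unfolding adjacent_def lo_def hi_def q_def by blast
  then show ?thesis
  proof
    assume bd: "(0 < i \<longrightarrow> adjacent ax (ax1 ! (i - 1)) (ax1 ! i))
        \<and> (Suc j < n \<longrightarrow> adjacent ax (ax1 ! j) (ax1 ! Suc j))"
    have "adjacent ax (ax1 ! t) (ax1 ! Suc t)" if "Suc t < length ax1" for t
    proof -
      consider "Suc t < i \<or> j < t \<or> (i \<le> t \<and> t < j)" | "Suc t = i" | "t = j" by linarith
      then show ?thesis
      proof cases
        case 1
        then show ?thesis using steady[of t] that n_def by simp
      qed (use bd that n_def in auto)
    qed
    then show ?thesis using axis_eq_or_rev_of_adjacent[OF ax ax1] by blast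
  next
    assume bd: "(0 < i \<longrightarrow> adjacent ax (ax1 ! (i - 1)) (ax1 ! j))
        \<and> (Suc j < n \<longrightarrow> adjacent ax (ax1 ! i) (ax1 ! Suc j))"
    have "adjacent ax (rev_segment i j ax1 ! t) (rev_segment i j ax1 ! Suc t)"
      if "Suc t < length (rev_segment i j ax1)" for t
    proof -
      have len: "Suc t < length ax1" using that by simp
      have inner: "adjacent ax (ax1 ! s) (ax1 ! Suc s)"
        if "Suc s < length ax1" "Suc s < i \<or> j < s \<or> (i \<le> s \<and> s < j)" for s
        using steady that n_def by simp
      have crossed: "adjacent ax (ax1 ! (i - 1)) (ax1 ! j)" if "0 < i" using bd that by simp
      have crossed': "adjacent ax (ax1 ! i) (ax1 ! Suc j)" if "Suc j < length ax1"
        using bd that n_def by simp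
      show ?thesis
        by (rule rev_segment_consecutive[OF ij len adjacent_sym[THEN iffD1] inner crossed crossed'])
    qed
    then show ?thesis
      using axis_eq_or_rev_of_adjacent[OF ax is_axis_rev_segment[OF ax1 ij(2)]] by blast
  qed
qed

lemma is_interval_interval_hull:
  assumes ax: "is_axis ax"
  shows "is_interval (interval_hull ax A) ax"
  unfolding is_interval_def
proof (intro ballI allI impI)
  fix a b c assume a: "a \<in> interval_hull ax A" and b: "b \<in> interval_hull ax A"
    and c: "axis_less ax a c \<and> axis_less ax c b"
  obtain y where y: "y \<in> A" "axis_le ax y a" using a unfolding interval_hull_def by blast
  obtain z where z: "z \<in> A" "axis_le ax b z" using b unfolding interval_hull_def by blast
  have "axis_le ax y c" "axis_le ax c z"
    using y(2) z(2) c unfolding axis_le_iff[OF ax] axis_less_iff[OF ax] by linarith+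
  then show "c \<in> interval_hull ax A" unfolding interval_hull_def using y(1) z(1) by blast
qed

definition ones :: "bool list \<Rightarrow> nat set" where
  "ones x = {t. t < length x \<and> x ! t}"

definition between_ones :: "bool list \<Rightarrow> nat \<Rightarrow> bool" where
  "between_ones x t \<longleftrightarrow> (\<exists>s\<le>t. x ! s) \<and> (\<exists>u. t \<le> u \<and> u < length x \<and> x ! u)"

definition hull_vector :: "bool list \<Rightarrow> bool list" where
  "hull_vector x = map (between_ones x) [0..<length x]"

definition interior_zeros :: "bool list \<Rightarrow> nat set" where
  "interior_zeros x = {t. t < length x \<and> between_ones x t \<and> \<not> x ! t}"

lemma finite_ones [simp]: "finite (ones x)"
  unfolding ones_def by simp

lemma finite_interior_zeros [simp]: "finite (interior_zeros x)"
  unfolding interior_zeros_def by simp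

lemma length_hull_vector [simp]: "length (hull_vector x) = length x"
  unfolding hull_vector_def by simp

lemma nth_hull_vector: "t < length x \<Longrightarrow> hull_vector x ! t = between_ones x t"
  unfolding hull_vector_def by simp

lemma between_ones_iff:
  assumes "p \<in> ones x" "e \<in> ones x" "ones x \<subseteq> {p..e}" "t < length x"
  shows "between_ones x t \<longleftrightarrow> p \<le> t \<and> t \<le> e"
proof
  assume "between_ones x t"
  then obtain s u where "s \<le> t" "x ! s" "t \<le> u" "u < length x" "x ! u"
    unfolding between_ones_def by blast
  moreover have "s < length x" using calculation by simp
  ultimately have "s \<in> ones x" "u \<in> ones x" unfolding ones_def by auto
  then show "p \<le> t \<and> t \<le> e" using assms(3) \<open>s \<le> t\<close> \<open>t \<le> u\<close> by auto
next
  assume "p \<le> t \<and> t \<le> e"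
  then show "between_ones x t" using assms(1,2) unfolding between_ones_def ones_def by blast
qed

lemma contiguous_hull_vector: "contiguous_ones (hull_vector x)"
  unfolding contiguous_ones_def
proof (intro allI impI)
  fix i j k assume ijk: "i < j \<and> j < k \<and> k < length (hull_vector x) \<and> hull_vector x ! i \<and> hull_vector x ! k"
  then have "between_ones x i" "between_ones x k" using nth_hull_vector[of i x] nth_hull_vector[of k x] by auto
  then have "between_ones x j" using ijk unfolding between_ones_def by (meson less_imp_le_nat order.trans)
  then show "hull_vector x ! j" using ijk nth_hull_vector[of j x] by simp
qed

lemma contiguous_ones_iff_interior_zeros: "contiguous_ones x \<longleftrightarrow> interior_zeros x = {}"
proof
  assume c: "contiguous_ones x"
  show "interior_zeros x = {}"
  proof (rule ccontr)
    assume "interior_zeros x \<noteq> {}"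
    then obtain t where t: "t < length x" "between_ones x t" "\<not> x ! t"
      unfolding interior_zeros_def by blast
    then obtain s u where su: "s \<le> t" "x ! s" "t \<le> u" "u < length x" "x ! u"
      unfolding between_ones_def by blast
    then have "s < t" "t < u" using t by (metis le_neq_implies_less)+
    then show False using c su t unfolding contiguous_ones_def by blast
  qed
next
  assume z: "interior_zeros x = {}"
  show "contiguous_ones x" unfolding contiguous_ones_def
  proof (intro allI impI)
    fix i j k assume ijk: "i < j \<and> j < k \<and> k < length x \<and> x ! i \<and> x ! k"
    then have "between_ones x j" unfolding between_ones_def by (meson less_imp_le_nat)
    then show "x ! j" using z ijk unfolding interior_zeros_def by auto
  qed
qed

lemma not_contiguous_iff_card_interior_zeros: "\<not> contiguous_ones x \<longleftrightarrow> card (interior_zeros x) \<noteq> 0"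
  by (simp add: contiguous_ones_iff_interior_zeros)

lemma ones_nonempty: "\<not> contiguous_ones x \<Longrightarrow> ones x \<noteq> {}"
  unfolding contiguous_ones_def ones_def by auto

lemma approval_vector_interval_hull:
  assumes ax: "is_axis ax"
  shows "approval_vector (interval_hull ax A) ax = hull_vector (approval_vector A ax)"
proof (rule nth_equalityI)
  fix t assume "t < length (approval_vector (interval_hull ax A) ax)"
  then have t: "t < length ax" by simp
  have "ax ! t \<in> interval_hull ax A \<longleftrightarrow>
      (\<exists>s\<le>t. ax ! s \<in> A) \<and> (\<exists>u. t \<le> u \<and> u < length ax \<and> ax ! u \<in> A)"
  proof
    assume "ax ! t \<in> interval_hull ax A"
    then obtain y z where yz: "y \<in> A" "z \<in> A" "axis_le ax y (ax ! t)" "axis_le ax (ax ! t) z"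
      unfolding interval_hull_def by blast
    then have "axis_pos ax y \<le> t" "t \<le> axis_pos ax z"
      using axis_le_iff[OF ax] axis_pos_nth[OF ax t] by auto
    moreover have "ax ! axis_pos ax y \<in> A" "ax ! axis_pos ax z \<in> A"
      using yz nth_axis_pos[OF ax, of y] nth_axis_pos[OF ax, of z] by simp_all
    ultimately show "(\<exists>s\<le>t. ax ! s \<in> A) \<and> (\<exists>u. t \<le> u \<and> u < length ax \<and> ax ! u \<in> A)"
      using axis_pos_less[OF ax, of z] by blast
  next
    assume "(\<exists>s\<le>t. ax ! s \<in> A) \<and> (\<exists>u. t \<le> u \<and> u < length ax \<and> ax ! u \<in> A)"
    then obtain s u where su: "s \<le> t" "ax ! s \<in> A" "t \<le> u" "u < length ax" "ax ! u \<in> A" by blast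
    then have "axis_le ax (ax ! s) (ax ! t)" "axis_le ax (ax ! t) (ax ! u)"
      using axis_le_iff[OF ax] axis_pos_nth[OF ax] t by auto
    then show "ax ! t \<in> interval_hull ax A" unfolding interval_hull_def using su by blast
  qed
  moreover have "(\<exists>s\<le>t. approval_vector A ax ! s) \<longleftrightarrow> (\<exists>s\<le>t. ax ! s \<in> A)"
    using t by (auto simp: nth_approval_vector)
  ultimately show "approval_vector (interval_hull ax A) ax ! t = hull_vector (approval_vector A ax) ! t"
    using t by (auto simp: nth_approval_vector nth_hull_vector between_ones_def)
qed simp

lemma card_ones_approval_vector:
  assumes ax: "is_axis ax"
  shows "card (ones (approval_vector A ax)) = card A"
proof -
  have "bij_betw ((!) ax) (ones (approval_vector A ax)) A"
  proof (rule bij_betwI')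
    fix s t assume "s \<in> ones (approval_vector A ax)" "t \<in> ones (approval_vector A ax)"
    then show "ax ! s = ax ! t \<longleftrightarrow> s = t" using axis_nth_eq_iff[OF ax] unfolding ones_def by simp
  next
    fix t assume "t \<in> ones (approval_vector A ax)"
    then show "ax ! t \<in> A" unfolding ones_def by (auto simp: nth_approval_vector)
  next
    fix c assume "c \<in> A"
    then have "axis_pos ax c \<in> ones (approval_vector A ax)"
      unfolding ones_def using approval_vector_axis_pos[OF ax] axis_pos_less[OF ax] by simp
    then show "\<exists>t\<in>ones (approval_vector A ax). c = ax ! t" using nth_axis_pos[OF ax, of c] by metis
  qed
  then show ?thesis by (rule bij_betw_same_card)
qed

lemma card_interior_zeros_approval_vector:
  assumes ax: "is_axis ax"
  shows "card (interior_zeros (approval_vector A ax)) = card (interfering A ax)"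
proof -
  have "bij_betw ((!) ax) (interior_zeros (approval_vector A ax)) (interfering A ax)"
  proof (rule bij_betwI')
    fix s t assume "s \<in> interior_zeros (approval_vector A ax)" "t \<in> interior_zeros (approval_vector A ax)"
    then show "ax ! s = ax ! t \<longleftrightarrow> s = t"
      using axis_nth_eq_iff[OF ax] unfolding interior_zeros_def by simp
  next
    fix t assume "t \<in> interior_zeros (approval_vector A ax)"
    then have t: "t < length ax" "between_ones (approval_vector A ax) t" "ax ! t \<notin> A"
      unfolding interior_zeros_def by (auto simp: nth_approval_vector)
    then obtain s u where su: "s \<le> t" "approval_vector A ax ! s" "t \<le> u" "u < length ax"
      "approval_vector A ax ! u"
      unfolding between_ones_def by auto
    then have A: "ax ! s \<in> A" "ax ! u \<in> A" using t by (auto simp: nth_approval_vector)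
    then have "s < t" "t < u" using su t le_neq_implies_less by blast+
    then have "axis_less ax (ax ! s) (ax ! t)" "axis_less ax (ax ! t) (ax ! u)"
      using axis_less_iff[OF ax] axis_pos_nth[OF ax] su t by auto
    then show "ax ! t \<in> interfering A ax" unfolding interfering_def using A t by blast
  next
    fix c assume "c \<in> interfering A ax"
    then obtain a b where ab: "c \<notin> A" "a \<in> A" "b \<in> A" "axis_less ax a c" "axis_less ax c b"
      unfolding interfering_def by blast
    then have "axis_pos ax a < axis_pos ax c" "axis_pos ax c < axis_pos ax b"
      using axis_less_iff[OF ax] by auto
    moreover have "approval_vector A ax ! axis_pos ax a" "approval_vector A ax ! axis_pos ax b"
      "\<not> approval_vector A ax ! axis_pos ax c"
      using ab approval_vector_axis_pos[OF ax] by simp_all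
    ultimately have "axis_pos ax c \<in> interior_zeros (approval_vector A ax)"
      using axis_pos_less[OF ax, of b] axis_pos_less[OF ax, of c]
      unfolding interior_zeros_def between_ones_def by (auto intro: less_imp_le)
    then show "\<exists>t\<in>interior_zeros (approval_vector A ax). c = ax ! t"
      using nth_axis_pos[OF ax, of c] by metis
  qed
  then show ?thesis by (rule bij_betw_same_card)
qed

lemma segment_reflect_preimage:
  assumes "j < n" "P \<subseteq> {..<n}"
  shows "{t. t < n \<and> segment_reflect i j t \<in> P} = segment_reflect i j ` P"
proof
  show "{t. t < n \<and> segment_reflect i j t \<in> P} \<subseteq> segment_reflect i j ` P"
  proof
    fix t assume "t \<in> {t. t < n \<and> segment_reflect i j t \<in> P}"
    then have "segment_reflect i j t \<in> P" by simp
    then show "t \<in> segment_reflect i j ` P"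
      using segment_reflect_segment_reflect[of i j t] by (metis imageI)
  qed
  show "segment_reflect i j ` P \<subseteq> {t. t < n \<and> segment_reflect i j t \<in> P}"
    using assms segment_reflect_less by auto
qed

lemma ones_rev_segment:
  assumes "j < length x"
  shows "ones (rev_segment i j x) = segment_reflect i j ` ones x"
proof -
  have "ones (rev_segment i j x) = {t. t < length x \<and> segment_reflect i j t \<in> ones x}"
    unfolding ones_def using assms segment_reflect_less by (auto simp: nth_rev_segment)
  also have "\<dots> = segment_reflect i j ` ones x"
    using assms by (intro segment_reflect_preimage) (auto simp: ones_def)
  finally show ?thesis .
qed

lemma interior_zeros_rev_segment:
  assumes "j < length x" and hull: "hull_vector (rev_segment i j x) = rev_segment i j (hull_vector x)"
  shows "interior_zeros (rev_segment i j x) = segment_reflect i j ` interior_zeros x"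
proof -
  have between: "between_ones (rev_segment i j x) t = between_ones x (segment_reflect i j t)"
    if "t < length x" for t
  proof -
    have "between_ones (rev_segment i j x) t = hull_vector (rev_segment i j x) ! t"
      using that by (simp add: nth_hull_vector)
    also have "\<dots> = hull_vector x ! segment_reflect i j t" using hull that by (simp add: nth_rev_segment)
    also have "\<dots> = between_ones x (segment_reflect i j t)"
      using that assms segment_reflect_less by (simp add: nth_hull_vector)
    finally show ?thesis .
  qed
  have "interior_zeros (rev_segment i j x) = {t. t < length x \<and> segment_reflect i j t \<in> interior_zeros x}"
    unfolding interior_zeros_def using assms segment_reflect_less between
    by (auto simp: nth_rev_segment)
  also have "\<dots> = segment_reflect i j ` interior_zeros x"
    using assms by (intro segment_reflect_preimage) (auto simp: interior_zeros_def)
  finally show ?thesis .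
qed

lemma card_ones_rev_segment:
  "j < length x \<Longrightarrow> card (ones (rev_segment i j x)) = card (ones x)"
  using ones_rev_segment card_image[OF inj_segment_reflect] by metis

lemma card_interior_zeros_rev_segment:
  "j < length x \<Longrightarrow> hull_vector (rev_segment i j x) = rev_segment i j (hull_vector x) \<Longrightarrow>
    card (interior_zeros (rev_segment i j x)) = card (interior_zeros x)"
  using interior_zeros_rev_segment card_image[OF inj_segment_reflect] by metis

lemma hull_vector_rev_segment:
  assumes p: "p \<in> ones x" and e: "e \<in> ones x" and pe: "ones x \<subseteq> {p..e}" and j: "j < length x"
    and p': "p' \<in> ones (rev_segment i j x)" and e': "e' \<in> ones (rev_segment i j x)"
    and pe': "ones (rev_segment i j x) \<subseteq> {p'..e'}"
    and reflect: "\<And>t. t < length x \<Longrightarrow>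
      p' \<le> t \<and> t \<le> e' \<longleftrightarrow> p \<le> segment_reflect i j t \<and> segment_reflect i j t \<le> e"
  shows "hull_vector (rev_segment i j x) = rev_segment i j (hull_vector x)"
proof (rule nth_equalityI)
  fix t assume "t < length (hull_vector (rev_segment i j x))"
  then have t: "t < length x" by simp
  have "hull_vector (rev_segment i j x) ! t \<longleftrightarrow> p' \<le> t \<and> t \<le> e'"
    using between_ones_iff[OF p' e' pe'] t by (simp add: nth_hull_vector)
  also have "\<dots> \<longleftrightarrow> between_ones x (segment_reflect i j t)"
    using reflect[OF t] between_ones_iff[OF p e pe] segment_reflect_less[OF j t] by simp
  also have "\<dots> \<longleftrightarrow> rev_segment i j (hull_vector x) ! t"
    using t segment_reflect_less[OF j t] by (simp add: nth_rev_segment nth_hull_vector)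
  finally show "hull_vector (rev_segment i j x) ! t = rev_segment i j (hull_vector x) ! t" by simp
qed simp

lemma hull_vector_rev_segment_cover:
  assumes p: "p \<in> ones x" and e: "e \<in> ones x" and pe: "ones x \<subseteq> {p..e}"
    and "i \<le> p" "e \<le> j" "j < length x"
  shows "hull_vector (rev_segment i j x) = rev_segment i j (hull_vector x)"
proof -
  have "p \<le> e" using p pe by auto
  have ones_y: "ones (rev_segment i j x) = segment_reflect i j ` ones x"
    using ones_rev_segment[OF \<open>j < length x\<close>] .
  have "segment_reflect i j p = i + j - p" "segment_reflect i j e = i + j - e"
    using assms \<open>p \<le> e\<close> unfolding segment_reflect_def by auto
  then have "i + j - e \<in> ones (rev_segment i j x)" "i + j - p \<in> ones (rev_segment i j x)"
    using ones_y p e by (metis imageI)+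
  moreover have "ones (rev_segment i j x) \<subseteq> {i + j - e..i + j - p}"
    using ones_y pe assms unfolding segment_reflect_def by force
  ultimately show ?thesis
    using assms \<open>p \<le> e\<close> by (intro hull_vector_rev_segment[OF p e pe]) (auto simp: segment_reflect_def)
qed

lemma hull_vector_rev_segment_inside:
  assumes p: "p \<in> ones x" and e: "e \<in> ones x" and pe: "ones x \<subseteq> {p..e}"
    and "p < i" "j < e" "j < length x"
  shows "hull_vector (rev_segment i j x) = rev_segment i j (hull_vector x)"
proof -
  have ones_y: "ones (rev_segment i j x) = segment_reflect i j ` ones x"
    using ones_rev_segment[OF \<open>j < length x\<close>] .
  have "segment_reflect i j p = p" "segment_reflect i j e = e"
    using assms unfolding segment_reflect_def by auto
  then have "p \<in> ones (rev_segment i j x)" "e \<in> ones (rev_segment i j x)"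
    using ones_y p e by (metis imageI)+
  moreover have "ones (rev_segment i j x) \<subseteq> {p..e}"
    using ones_y pe assms unfolding segment_reflect_def by force
  ultimately show ?thesis
    using assms by (intro hull_vector_rev_segment[OF p e pe]) (auto simp: segment_reflect_def)
qed

definition canonical_vector :: "nat \<Rightarrow> nat \<Rightarrow> nat \<Rightarrow> bool list" where
  "canonical_vector m a b = map (\<lambda>t. t = 0 \<or> (b < t \<and> t < a + b)) [0..<m]"

lemma approval_vector_image_ones:
  assumes ax: "is_axis ax" and "length x = length ax"
  shows "approval_vector ((!) ax ` ones x) ax = x"
proof (rule nth_equalityI)
  fix t assume "t < length (approval_vector ((!) ax ` ones x) ax)"
  then have t: "t < length ax" by simp
  have "ax ! t \<in> (!) ax ` ones x \<longleftrightarrow> t \<in> ones x"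
    using axis_nth_eq_iff[OF ax] t assms(2) unfolding ones_def by auto
  then show "approval_vector ((!) ax ` ones x) ax ! t = x ! t"
    using t assms(2) by (simp add: nth_approval_vector ones_def)
qed (use assms in simp)

lemma ex_axis: "\<exists>ax :: 'c::finite list. is_axis ax"
  using finite_distinct_list[of "UNIV :: 'c set"] unfolding is_axis_def by auto

lemma canonical_vector_of_initial_interior_zeros:
  assumes x0: "x ! 0" and nx: "\<not> contiguous_ones x"
    and closed: "\<And>z. z \<in> interior_zeros x \<Longrightarrow> 2 \<le> z \<Longrightarrow> z - 1 \<in> interior_zeros x"
  shows "x = canonical_vector (length x) (card (ones x)) (card (interior_zeros x))"
proof -
  define I where "I = interior_zeros x"
  define e where "e = Max (ones x)"
  have "0 < length x" using nx unfolding contiguous_ones_def by auto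
  then have p: "0 \<in> ones x" using x0 unfolding ones_def by simp
  have e: "e \<in> ones x" and pe: "ones x \<subseteq> {0..e}"
    using ones_nonempty[OF nx] unfolding e_def by auto
  have I_iff: "z \<in> I \<longleftrightarrow> z \<le> e \<and> \<not> x ! z" if "z < length x" for z
    using between_ones_iff[OF p e pe that] that unfolding I_def interior_zeros_def by simp
  have I_bounds: "0 < z \<and> z < e" if "z \<in> I" for z
  proof -
    have "z < length x" using that unfolding I_def interior_zeros_def by simp
    then have "z \<le> e" "\<not> x ! z" using I_iff that by simp_all
    moreover have "z \<noteq> 0" using x0 calculation(2) by (cases z) auto
    moreover have "z \<noteq> e" using e calculation(2) unfolding ones_def by auto
    ultimately show ?thesis by simp
  qed
  have "I \<noteq> {}" "finite I"
    using nx contiguous_ones_iff_interior_zeros unfolding I_def by simp_all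
  define M where "M = Max I"
  have "M \<in> I" using \<open>I \<noteq> {}\<close> \<open>finite I\<close> unfolding M_def by simp
  have below: "n \<in> I" if "1 \<le> n" "n \<le> M" for n
    using that
  proof (induction "M - n" arbitrary: n)
    case 0
    then show ?case using \<open>M \<in> I\<close> by simp
  next
    case (Suc k)
    then have "Suc n \<in> I" by simp
    then show ?case using closed[of "Suc n"] Suc.prems unfolding I_def by simp
  qed
  have I: "I = {1..M}"
  proof (intro equalityI subsetI)
    fix z assume "z \<in> I"
    then show "z \<in> {1..M}" using I_bounds[of z] Max_ge[OF \<open>finite I\<close>, of z] unfolding M_def by simp
  next
    fix z assume "z \<in> {1..M}"
    then show "z \<in> I" using below by simp
  qed
  have "M < e" using I_bounds \<open>M \<in> I\<close> by simp
  have nth_x: "x ! t \<longleftrightarrow> t = 0 \<or> (M < t \<and> t \<le> e)" if "t < length x" for t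
  proof (cases "t = 0")
    case True
    then show ?thesis using x0 by simp
  next
    case False
    show ?thesis
    proof (cases "t \<le> e")
      case True
      then have "x ! t \<longleftrightarrow> t \<notin> I" using I_iff[OF that] by simp
      also have "\<dots> \<longleftrightarrow> M < t" using I False by auto
      finally show ?thesis using False True by simp
    next
      case False
      then have "t \<notin> ones x" using pe by auto
      then show ?thesis using that False unfolding ones_def by auto
    qed
  qed
  have "e < length x" using e unfolding ones_def by simp
  then have "ones x = insert 0 {Suc M..e}" using nth_x \<open>M < e\<close> x0 unfolding ones_def by auto
  then have "card (ones x) + card I = Suc e" "card I = M" using I \<open>M < e\<close> by simp_all
  then show ?thesis
    unfolding canonical_vector_def I_def[symmetric] using nth_x
    by (intro nth_equalityI) auto
qed

lemma finite_axes: "finite (axes :: 'c::finite list set)"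
proof (rule finite_subset)
  show "axes \<subseteq> {xs :: 'c list. length xs = card (UNIV :: 'c set)}"
    unfolding axes_def using length_axis by blast
qed (rule finite_list_length)

lemma ex_nat_mult_ge:
  fixes M :: real
  assumes "finite W"
  shows "\<exists>N::nat. \<forall>w\<in>W. 0 < w \<longrightarrow> M \<le> real N * w"
  using assms
proof (induction W rule: finite_induct)
  case empty
  then show ?case by simp
next
  case (insert w W)
  obtain N :: nat where N: "\<forall>v\<in>W. 0 < v \<longrightarrow> M \<le> real N * v" using insert.IH by blast
  show ?case
  proof (cases "0 < w")
    case True
    obtain k :: nat where k: "M < real k * w" using ex_less_of_nat_mult[OF True] by blast
    have "M \<le> real (max N k) * v" if "v \<in> insert w W" "0 < v" for v
    proof -
      have "real N * v \<le> real (max N k) * v" "real k * v \<le> real (max N k) * v"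
        using \<open>0 < v\<close> by (simp_all add: mult_right_mono)
      moreover have "M \<le> real k * v \<or> M \<le> real N * v" using N k that by auto
      ultimately show ?thesis by linarith
    qed
    then show ?thesis by blast
  next
    case False
    then show ?thesis using N by auto
  qed
qed

lemma total_cost_Nil [simp]: "total_cost c [] ax = 0"
  and total_cost_Cons [simp]: "total_cost c (A # P) ax = c A ax + total_cost c P ax"
  and total_cost_append [simp]: "total_cost c (P @ P') ax = total_cost c P ax + total_cost c P' ax"
  unfolding total_cost_def by simp_all

lemma total_cost_replicate [simp]: "total_cost c (replicate k A) ax = real k * c A ax"
  by (induction k) (simp_all add: algebra_simps)

lemma total_cost_concat_replicate [simp]:
  "total_cost c (concat (replicate N P)) ax = real N * total_cost c P ax"
  by (induction N) (simp_all add: algebra_simps)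

lemma total_cost_nonneg: "(\<And>A. A \<in> set P \<Longrightarrow> 0 \<le> c A ax) \<Longrightarrow> 0 \<le> total_cost c P ax"
  unfolding total_cost_def by (rule sum_list_nonneg) auto

lemma total_cost_eq_0_iff:
  "(\<And>A. A \<in> set P \<Longrightarrow> 0 \<le> c A ax) \<Longrightarrow> total_cost c P ax = 0 \<longleftrightarrow> (\<forall>A\<in>set P. c A ax = 0)"
  unfolding total_cost_def by (subst sum_list_nonneg_eq_0_iff) auto

text \<open>Enough copies of the ballots Q restrict the optimum to the axes on which every
  ballot of Q costs nothing.\<close>

lemma mem_scoring_rule_padding:
  fixes c :: "'c::finite set \<Rightarrow> 'c list \<Rightarrow> real"
  assumes nonneg: "\<And>S ax. ax \<in> axes \<Longrightarrow> 0 \<le> c S ax"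
    and ax0: "ax0 \<in> axes" and zero: "\<forall>S\<in>set Q. c S ax0 = 0"
    and better: "\<And>ax. ax \<in> axes \<Longrightarrow> \<forall>S\<in>set Q. c S ax = 0 \<Longrightarrow> total_cost c R ax0 \<le> total_cost c R ax"
  shows "\<exists>N. ax0 \<in> scoring_rule c (R @ concat (replicate N Q))"
proof -
  have Q_zero: "total_cost c Q ax = 0 \<longleftrightarrow> (\<forall>S\<in>set Q. c S ax = 0)" if "ax \<in> axes" for ax
    using total_cost_eq_0_iff nonneg[OF that] by blast
  obtain N where N: "\<forall>w\<in>(\<lambda>ax. total_cost c Q ax) ` axes. 0 < w \<longrightarrow> total_cost c R ax0 \<le> real N * w"
    using ex_nat_mult_ge finite_axes by blast
  have "total_cost c (R @ concat (replicate N Q)) ax0 \<le> total_cost c (R @ concat (replicate N Q)) ax"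
    if ax: "ax \<in> axes" for ax
  proof (cases "\<forall>S\<in>set Q. c S ax = 0")
    case True
    then show ?thesis using better[OF ax True] Q_zero[OF ax] Q_zero[OF ax0] zero by simp
  next
    case False
    then have "0 < total_cost c Q ax" using Q_zero[OF ax] total_cost_nonneg nonneg[OF ax]
      by (metis order_le_less)
    then have "total_cost c R ax0 \<le> real N * total_cost c Q ax" using N ax by blast
    moreover have "0 \<le> total_cost c R ax" using total_cost_nonneg nonneg[OF ax] by blast
    moreover have "total_cost c Q ax0 = 0" using Q_zero[OF ax0] zero by simp
    ultimately show ?thesis by simp
  qed
  then show ?thesis unfolding scoring_rule_def using ax0 by blast
qed

lemma ex_interval_broken_by_rev_segment:
  assumes ax: "is_axis ax" and ij: "i < j" "j < length ax"
    and proper: "\<not> (i = 0 \<and> j = length ax - 1)"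
  obtains B where "B \<noteq> {}" "is_interval B ax" "\<not> is_interval B (rev_segment i j ax)"
proof -
  let ?ax2 = "rev_segment i j ax"
  have ax2: "is_axis ?ax2" using is_axis_rev_segment[OF ax ij(2)] .
  have distinct: "ax ! s \<noteq> ax ! t" if "s < length ax" "t < length ax" "s \<noteq> t" for s t
    using axis_nth_eq_iff[OF ax] that by simp
  show ?thesis
  proof (cases "0 < i")
    case True
    let ?B = "axis_segment ax (i - 1) i"
    have B: "?B = {ax ! (i - 1), ax ! i}" using axis_segment_Suc[of ax "i - 1"] True by simp
    have "segment_reflect i j (i - 1) = i - 1" "segment_reflect i j i = j" "segment_reflect i j j = i"
      using True ij by (auto simp: segment_reflect_def)
    then have "?ax2 ! (i - 1) = ax ! (i - 1)" "?ax2 ! i = ax ! j" "?ax2 ! j = ax ! i"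
      using ij by (simp_all add: nth_rev_segment)
    moreover have "ax ! j \<notin> ?B" using B distinct[of j "i - 1"] distinct[of j i] ij by auto
    ultimately have "\<not> is_interval ?B ?ax2"
      using not_interval_of_gap[OF ax2, of "i - 1" i j ?B] B True ij by simp
    moreover have "is_interval ?B ax" using is_interval_axis_segment[OF ax] ij by simp
    ultimately show ?thesis using that B by blast
  next
    case False
    then have "i = 0" "Suc j < length ax" using proper ij by auto
    let ?B = "axis_segment ax j (Suc j)"
    have B: "?B = {ax ! j, ax ! Suc j}" by (rule axis_segment_Suc)
    have "segment_reflect i j i = j" "segment_reflect i j j = i" "segment_reflect i j (Suc j) = Suc j"
      using ij by (auto simp: segment_reflect_def)
    then have "?ax2 ! i = ax ! j" "?ax2 ! j = ax ! i" "?ax2 ! Suc j = ax ! Suc j"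
      using \<open>Suc j < length ax\<close> ij by (simp_all add: nth_rev_segment)
    moreover have "ax ! i \<notin> ?B"
      using B distinct[of i j] distinct[of i "Suc j"] ij \<open>Suc j < length ax\<close> by auto
    ultimately have "\<not> is_interval ?B ?ax2"
      using not_interval_of_gap[OF ax2, of i j "Suc j" ?B] B \<open>Suc j < length ax\<close> ij by simp
    moreover have "is_interval ?B ax" using is_interval_axis_segment[OF ax] \<open>Suc j < length ax\<close> by simp
    ultimately show ?thesis using that B by blast
  qed
qed

lemma ex_nat_threshold:
  fixes D e :: real
  assumes "0 < D" "0 < e"
  shows "\<exists>k::nat. real k * D < e \<and> e \<le> (real k + 1) * D"
proof -
  have "0 < \<lceil>e / D\<rceil>" using assms by simp
  then have k: "real (nat (\<lceil>e / D\<rceil> - 1)) = of_int \<lceil>e / D\<rceil> - 1" by simp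
  have "of_int \<lceil>e / D\<rceil> - 1 < e / D" using ceiling_correct[of "e / D"] by simp
  then have "(of_int \<lceil>e / D\<rceil> - 1) * D < e" by (simp only: pos_less_divide_eq[OF assms(1)])
  moreover have "e / D \<le> of_int \<lceil>e / D\<rceil>" by (rule le_of_int_ceiling)
  then have "e \<le> of_int \<lceil>e / D\<rceil> * D" by (simp only: pos_divide_le_eq[OF assms(1)])
  ultimately have "real (nat (\<lceil>e / D\<rceil> - 1)) * D < e" "e \<le> (real (nat (\<lceil>e / D\<rceil> - 1)) + 1) * D"
    unfolding k by simp_all
  then show ?thesis by blast
qed

locale monotone_scoring =
  fixes g :: "bool list \<Rightarrow> real"
    and f :: "'c::finite profile \<Rightarrow> 'c list set"
  assumes g_nonneg: "\<And>x. length x = card (UNIV :: 'c set) \<Longrightarrow> g x \<ge> 0"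
    and g_zero: "\<And>x. length x = card (UNIV :: 'c set) \<Longrightarrow> (g x = 0 \<longleftrightarrow> contiguous_ones x)"
    and g_rev: "\<And>x. length x = card (UNIV :: 'c set) \<Longrightarrow> g x = g (rev x)"
    and f_scoring: "f = scoring_rule (\<lambda>A ax. g (approval_vector A ax))"
    and mono: "ballot_monotone f"
begin

abbreviation cost :: "'c set \<Rightarrow> 'c list \<Rightarrow> real" where
  "cost A ax \<equiv> g (approval_vector A ax)"

lemma cost_nonneg: "is_axis ax \<Longrightarrow> 0 \<le> cost A ax"
  using g_nonneg[of "approval_vector A ax"] length_axis[of ax] by simp

lemma cost_eq_0_iff: "is_axis ax \<Longrightarrow> cost A ax = 0 \<longleftrightarrow> is_interval A ax"
  using g_zero[of "approval_vector A ax"] length_axis[of ax] contiguous_approval_vector_iff[of ax A]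
  by simp

lemma cost_rev: "is_axis ax \<Longrightarrow> cost A (rev ax) = cost A ax"
  using g_rev[of "approval_vector A ax"] length_axis[of ax] by (simp add: approval_vector_rev)

lemma total_cost_rev: "is_axis ax \<Longrightarrow> total_cost cost P (rev ax) = total_cost cost P ax"
  unfolding total_cost_def using cost_rev by simp

lemma rev_segment_optimal_after_padding:
  assumes ax1: "is_axis ax1" and ij: "i < j" "j < length ax1"
    and le: "total_cost cost R (rev_segment i j ax1) \<le> total_cost cost R ax1"
  obtains Q N where "\<forall>S\<in>set Q. S \<noteq> {} \<and> is_interval S ax1 \<and> is_interval S (rev_segment i j ax1)"
    and "rev_segment i j ax1 \<in> f (R @ concat (replicate N Q))"
proof -
  let ?ax2 = "rev_segment i j ax1"
  have ax2: "is_axis ?ax2" using is_axis_rev_segment[OF ax1 ij(2)] .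
  obtain Q where Q: "set Q = {S. S \<noteq> {} \<and> is_interval S ax1 \<and> is_interval S ?ax2}"
    using finite_list[of "{S. S \<noteq> {} \<and> is_interval S ax1 \<and> is_interval S ?ax2}"] by auto
  have nonneg: "0 \<le> cost S ax" if "ax \<in> axes" for S ax
    using cost_nonneg that unfolding axes_def by simp
  have zero: "\<forall>S\<in>set Q. cost S ?ax2 = 0" using Q cost_eq_0_iff[OF ax2] by simp
  have "total_cost cost R ?ax2 \<le> total_cost cost R ax"
    if "ax \<in> axes" "\<forall>S\<in>set Q. cost S ax = 0" for ax
  proof -
    have ax: "is_axis ax" using that(1) unfolding axes_def by simp
    have "is_interval S ax" if "S \<noteq> {}" "is_interval S ax1" "is_interval S ?ax2" for S
      using that \<open>\<forall>S\<in>set Q. cost S ax = 0\<close> Q cost_eq_0_iff[OF ax] by auto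
    then have "ax = ax1 \<or> ax = rev ax1 \<or> ax = ?ax2 \<or> ax = rev ?ax2"
      using axis_respecting_common_intervals[OF ax1 ij ax] by blast
    then show ?thesis using le total_cost_rev[OF ax1] total_cost_rev[OF ax2] by auto
  qed
  then obtain N where "?ax2 \<in> f (R @ concat (replicate N Q))"
    using mem_scoring_rule_padding[of cost ?ax2 Q R, OF nonneg _ zero] ax2
    unfolding f_scoring axes_def by blast
  then show ?thesis using that Q by blast
qed

lemma cost_le_rev_segment:
  assumes ax1: "is_axis ax1" and ij: "i < j" "j < length ax1" and "A \<noteq> {}"
    and not_interval: "\<not> is_interval A (rev_segment i j ax1)"
    and hull: "is_interval (interval_hull (rev_segment i j ax1) A) ax1"
  shows "cost A ax1 \<le> cost A (rev_segment i j ax1)"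
proof (rule ccontr)
  define ax2 where "ax2 = rev_segment i j ax1"
  define D where "D = cost A ax1 - cost A ax2"
  assume "\<not> cost A ax1 \<le> cost A (rev_segment i j ax1)"
  then have "0 < D" unfolding D_def ax2_def by simp
  have ax2: "is_axis ax2" unfolding ax2_def using is_axis_rev_segment[OF ax1 ij(2)] .
  have "\<not> (i = 0 \<and> j = length ax1 - 1)"
  proof
    assume "i = 0 \<and> j = length ax1 - 1"
    then have "ax2 = rev ax1" unfolding ax2_def using rev_segment_whole[of ax1] by simp
    then show False using \<open>0 < D\<close> cost_rev[OF ax1] unfolding D_def by simp
  qed
  then obtain B where B: "B \<noteq> {}" "is_interval B ax1" "\<not> is_interval B ax2"
    using ex_interval_broken_by_rev_segment[OF ax1 ij] unfolding ax2_def by blast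
  define e where "e = cost B ax2"
  have "0 < e" "cost B ax1 = 0"
    using cost_nonneg[OF ax2, of B] cost_eq_0_iff[OF ax2, of B] cost_eq_0_iff[OF ax1, of B] B(2,3)
    unfolding e_def by simp_all
  text \<open>With k + 1 copies of A and the ballot B, the reversed axis is optimal; with k copies
    of A it is strictly worse than the original one.\<close>
  obtain k :: nat where k: "real k * D < e" "e \<le> (real k + 1) * D"
    using ex_nat_threshold[OF \<open>0 < D\<close> \<open>0 < e\<close>] by blast
  define R where "R = A # replicate k A @ [B]"
  have "total_cost cost R ax2 \<le> total_cost cost R ax1"
    using k(2) \<open>cost B ax1 = 0\<close> unfolding R_def D_def e_def by (simp add: algebra_simps)
  then obtain Q N where Q: "\<forall>S\<in>set Q. S \<noteq> {} \<and> is_interval S ax1 \<and> is_interval S ax2"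
    and opt: "ax2 \<in> f (R @ concat (replicate N Q))"
    using rev_segment_optimal_after_padding[OF ax1 ij] unfolding ax2_def by blast
  define P where "P = R @ concat (replicate N Q)"
  define H where "H = interval_hull ax2 A"
  have "P ! 0 = A" unfolding P_def R_def by simp
  have "S \<noteq> {}" if "S \<in> set P" for S
  proof -
    have "S = A \<or> S = B \<or> S \<in> set Q" using that unfolding P_def R_def by auto
    then show ?thesis using \<open>A \<noteq> {}\<close> B(1) Q by auto
  qed
  then have "is_profile P" unfolding is_profile_def is_ballot_def by blast
  moreover have "0 < length P" unfolding P_def R_def by simp
  moreover have "ax2 \<in> f P" using opt unfolding P_def .
  moreover have "\<not> is_interval (P ! 0) ax2" using not_interval \<open>P ! 0 = A\<close> unfolding ax2_def by simp
  ultimately have "ax2 \<in> f (P[0 := interval_hull ax2 (P ! 0)])"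
    using mono unfolding ballot_monotone_def by blast
  then have "ax2 \<in> scoring_rule cost (H # replicate k A @ [B] @ concat (replicate N Q))"
    unfolding \<open>P ! 0 = A\<close> f_scoring H_def[symmetric] unfolding P_def R_def by simp
  then have "total_cost cost (H # replicate k A @ [B] @ concat (replicate N Q)) ax2
      \<le> total_cost cost (H # replicate k A @ [B] @ concat (replicate N Q)) ax1"
    using ax1 unfolding scoring_rule_def axes_def by blast
  moreover have "cost H ax2 = 0" "cost H ax1 = 0"
    using is_interval_interval_hull[OF ax2] hull cost_eq_0_iff[OF ax1] cost_eq_0_iff[OF ax2]
    unfolding H_def ax2_def by simp_all
  moreover have "total_cost cost Q ax1 = 0" "total_cost cost Q ax2 = 0"
    using Q total_cost_eq_0_iff[of Q cost ax1] total_cost_eq_0_iff[of Q cost ax2]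
      cost_nonneg[OF ax1] cost_nonneg[OF ax2] cost_eq_0_iff[OF ax1] cost_eq_0_iff[OF ax2]
    by simp_all
  ultimately have "real k * cost A ax2 + e \<le> real k * cost A ax1"
    using \<open>cost B ax1 = 0\<close> unfolding e_def by simp
  then show False using k(1) unfolding D_def by (simp add: algebra_simps)
qed

lemma g_le_rev_segment:
  fixes ax :: "'c list"
  assumes ax: "is_axis ax" and x: "approval_vector A ax = x" and ij: "i < j" "j < length x"
    and hull: "hull_vector (rev_segment i j x) = rev_segment i j (hull_vector x)"
    and ny: "\<not> contiguous_ones (rev_segment i j x)"
  shows "g x \<le> g (rev_segment i j x)"
proof -
  let ?ax2 = "rev_segment i j ax"
  have j: "j < length ax" using ij x by auto
  have ax2: "is_axis ?ax2" using is_axis_rev_segment[OF ax j] .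
  have twice: "rev_segment i j ?ax2 = ax" using rev_segment_rev_segment[OF j] .
  have av2: "approval_vector S ?ax2 = rev_segment i j (approval_vector S ax)" for S
    using approval_vector_rev_segment[OF j] .
  have av: "approval_vector S ax = rev_segment i j (approval_vector S ?ax2)" for S
    using approval_vector_rev_segment[of j ?ax2 S i] j twice by simp
  have x2: "approval_vector A ?ax2 = rev_segment i j x" using av2[of A] x by simp
  have "approval_vector (interval_hull ?ax2 A) ax
      = rev_segment i j (approval_vector (interval_hull ?ax2 A) ?ax2)" by (rule av)
  also have "\<dots> = rev_segment i j (hull_vector (rev_segment i j x))"
    using approval_vector_interval_hull[OF ax2, of A] x2 by simp
  also have "\<dots> = hull_vector x" using hull rev_segment_rev_segment[of j "hull_vector x" i] ij by simp
  finally have hull_interval: "is_interval (interval_hull ?ax2 A) ax"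
    using contiguous_approval_vector_iff[OF ax] contiguous_hull_vector by metis
  have "ones x \<noteq> {}" using ones_nonempty[OF ny] ones_rev_segment[OF ij(2)] by auto
  then have "A \<noteq> {}" using x unfolding ones_def by (auto simp: nth_approval_vector)
  moreover have "\<not> is_interval A ?ax2"
    using ny contiguous_approval_vector_iff[OF ax2, of A] x2 by simp
  ultimately have "cost A ax \<le> cost A ?ax2" using cost_le_rev_segment[OF ax ij(1) j] hull_interval by blast
  then show ?thesis using x av2 by simp
qed

lemma g_rev_segment:
  assumes lx: "length x = card (UNIV :: 'c set)" and ij: "i < j" "j < length x"
    and hull: "hull_vector (rev_segment i j x) = rev_segment i j (hull_vector x)"
    and nx: "\<not> contiguous_ones x" and ny: "\<not> contiguous_ones (rev_segment i j x)"
  shows "g x = g (rev_segment i j x)"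
proof -
  obtain ax :: "'c list" where ax: "is_axis ax" using ex_axis by blast
  define A where "A = (!) ax ` ones x"
  have x: "approval_vector A ax = x" unfolding A_def using approval_vector_image_ones[OF ax] lx ax
    by (simp add: length_axis)
  have "j < length ax" using ij x by auto
  have x2: "approval_vector A (rev_segment i j ax) = rev_segment i j x"
    using approval_vector_rev_segment[OF \<open>j < length ax\<close>] x by simp
  have twice: "rev_segment i j (rev_segment i j x) = x" using rev_segment_rev_segment[OF ij(2)] .
  have "g x \<le> g (rev_segment i j x)" using g_le_rev_segment[OF ax x ij hull ny] .
  moreover have "g (rev_segment i j x) \<le> g x"
    using g_le_rev_segment[OF is_axis_rev_segment[OF ax \<open>j < length ax\<close>] x2 ij(1)] ij hull twice nx
    by (simp add: rev_segment_rev_segment)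
  ultimately show ?thesis by simp
qed

lemma g_leading_one:
  assumes lx: "length x = card (UNIV :: 'c set)" and nx: "\<not> contiguous_ones x"
  obtains y where "length y = length x" "\<not> contiguous_ones y" "y ! 0"
    "card (ones y) = card (ones x)" "card (interior_zeros y) = card (interior_zeros x)" "g y = g x"
proof -
  define p where "p = Min (ones x)"
  define e where "e = Max (ones x)"
  have p: "p \<in> ones x" and e: "e \<in> ones x" and pe: "ones x \<subseteq> {p..e}"
    using ones_nonempty[OF nx] unfolding p_def e_def by auto
  have el: "e < length x" using e unfolding ones_def by simp
  show ?thesis
  proof (cases "p = 0")
    case True
    then show ?thesis using that[of x] nx p unfolding ones_def by simp
  next
    case False
    then have "0 < e" using p pe by auto
    define y where "y = rev_segment 0 e x"
    have hull: "hull_vector (rev_segment 0 e x) = rev_segment 0 e (hull_vector x)"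
      using hull_vector_rev_segment_cover[OF p e pe _ order.refl el] by simp
    have cards: "card (ones y) = card (ones x)" "card (interior_zeros y) = card (interior_zeros x)"
      unfolding y_def using card_ones_rev_segment[OF el] card_interior_zeros_rev_segment[OF el hull]
      by simp_all
    have ny: "\<not> contiguous_ones y" using cards nx not_contiguous_iff_card_interior_zeros by metis
    have "g x = g y" unfolding y_def using g_rev_segment[OF lx \<open>0 < e\<close> el hull nx] ny y_def by simp
    moreover have "y ! 0"
    proof -
      have "0 < length x" using el by linarith
      then show ?thesis using e unfolding y_def ones_def by (simp add: nth_rev_segment segment_reflect_def)
    qed
    ultimately show ?thesis using that[of y] cards ny unfolding y_def by simp
  qed
qed

lemma g_swap_interior_zero:
  assumes lx: "length x = card (UNIV :: 'c set)" and nx: "\<not> contiguous_ones x" and x0: "x ! 0"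
    and z: "z \<in> interior_zeros x" "2 \<le> z" "z - 1 \<notin> interior_zeros x"
  obtains y where "length y = length x" "\<not> contiguous_ones y" "y ! 0"
    "card (ones y) = card (ones x)" "card (interior_zeros y) = card (interior_zeros x)" "g y = g x"
    "\<Sum> (interior_zeros y) < \<Sum> (interior_zeros x)"
proof -
  define e where "e = Max (ones x)"
  have "0 < length x" using x0 nx unfolding contiguous_ones_def by auto
  then have p: "0 \<in> ones x" using x0 unfolding ones_def by simp
  have e: "e \<in> ones x" and pe: "ones x \<subseteq> {0..e}"
    using ones_nonempty[OF nx] unfolding e_def by auto
  have "z < length x" "between_ones x z" "\<not> x ! z" using z(1) unfolding interior_zeros_def by auto
  then have "z \<le> e" "z \<noteq> e" using between_ones_iff[OF p e pe] e unfolding ones_def by auto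
  then have "z < e" by simp
  define y where "y = rev_segment (z - 1) z x"
  have hull: "hull_vector (rev_segment (z - 1) z x) = rev_segment (z - 1) z (hull_vector x)"
    using hull_vector_rev_segment_inside[OF p e pe _ \<open>z < e\<close> \<open>z < length x\<close>] z(2) by simp
  have cards: "card (ones y) = card (ones x)" "card (interior_zeros y) = card (interior_zeros x)"
    unfolding y_def
    using card_ones_rev_segment[OF \<open>z < length x\<close>] card_interior_zeros_rev_segment[OF \<open>z < length x\<close> hull]
    by simp_all
  have ny: "\<not> contiguous_ones y" using cards nx not_contiguous_iff_card_interior_zeros by metis
  have "g x = g y"
    using g_rev_segment[OF lx _ \<open>z < length x\<close> hull nx] ny z(2) unfolding y_def by simp
  moreover have "y ! 0" using x0 z(2) \<open>0 < length x\<close>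
    unfolding y_def by (simp add: nth_rev_segment segment_reflect_def)
  moreover have "\<Sum> (interior_zeros y) < \<Sum> (interior_zeros x)"
  proof -
    have "\<Sum> (interior_zeros y) = (\<Sum>t\<in>interior_zeros x. segment_reflect (z - 1) z t)"
      unfolding y_def interior_zeros_rev_segment[OF \<open>z < length x\<close> hull]
      by (simp add: sum.reindex[OF inj_segment_reflect])
    also have "\<dots> < \<Sum> (interior_zeros x)"
    proof (rule sum_strict_mono_ex1)
      show "\<forall>t\<in>interior_zeros x. segment_reflect (z - 1) z t \<le> t"
      proof
        fix t assume t: "t \<in> interior_zeros x"
        show "segment_reflect (z - 1) z t \<le> t"
        proof (cases "z - 1 \<le> t \<and> t \<le> z")
          case True
          then have "t = z" using t z(3) by (cases "t = z - 1") auto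
          then show ?thesis unfolding segment_reflect_def by simp
        next
          case False
          then show ?thesis unfolding segment_reflect_def if_not_P[OF False] by simp
        qed
      qed
      show "\<exists>t\<in>interior_zeros x. segment_reflect (z - 1) z t < t"
        using z(1,2) unfolding segment_reflect_def by (intro bexI[of _ z]) auto
    qed simp
    finally show ?thesis .
  qed
  ultimately show ?thesis using that[of y] cards ny unfolding y_def by simp
qed

lemma g_eq_canonical_vector:
  assumes lx: "length x = card (UNIV :: 'c set)" and nx: "\<not> contiguous_ones x"
  shows "g x = g (canonical_vector (length x) (card (ones x)) (card (interior_zeros x)))"
proof -
  have leading: "g y = g (canonical_vector (length y) (card (ones y)) (card (interior_zeros y)))"
    if "length y = card (UNIV :: 'c set)" "\<not> contiguous_ones y" "y ! 0" for y
    using that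
  proof (induction "\<Sum> (interior_zeros y)" arbitrary: y rule: less_induct)
    case less
    show ?case
    proof (cases "\<exists>z\<in>interior_zeros y. 2 \<le> z \<and> z - 1 \<notin> interior_zeros y")
      case True
      then obtain z where z: "z \<in> interior_zeros y" "2 \<le> z" "z - 1 \<notin> interior_zeros y" by blast
      obtain y' where y': "length y' = length y" "\<not> contiguous_ones y'" "y' ! 0"
        "card (ones y') = card (ones y)" "card (interior_zeros y') = card (interior_zeros y)" "g y' = g y"
        "\<Sum> (interior_zeros y') < \<Sum> (interior_zeros y)"
        using g_swap_interior_zero[OF less.prems z] by blast
      then show ?thesis using less.hyps[OF y'(7)] less.prems(1) by simp
    next
      case False
      then have "y = canonical_vector (length y) (card (ones y)) (card (interior_zeros y))"
        using less.prems by (intro canonical_vector_of_initial_interior_zeros) auto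
      then show ?thesis by simp
    qed
  qed
  obtain y where "length y = length x" "\<not> contiguous_ones y" "y ! 0"
    "card (ones y) = card (ones x)" "card (interior_zeros y) = card (interior_zeros x)" "g y = g x"
    using g_leading_one[OF lx nx] by blast
  then show ?thesis using leading[of y] lx by simp
qed

end

theorem mainTheorem13:
  fixes g :: "bool list \<Rightarrow> real"
    and f :: "'c::finite profile \<Rightarrow> 'c list set"
  assumes m3: "card (UNIV :: 'c set) \<ge> 3"
    and g_nonneg: "\<And>x. length x = card (UNIV :: 'c set) \<Longrightarrow> g x \<ge> 0"
    and g_zero: "\<And>x. length x = card (UNIV :: 'c set) \<Longrightarrow> (g x = 0 \<longleftrightarrow> contiguous_ones x)"
    and g_rev: "\<And>x. length x = card (UNIV :: 'c set) \<Longrightarrow> g x = g (rev x)"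
    and f_scoring: "f = scoring_rule (\<lambda>A ax. g (approval_vector A ax))"
    and mono: "ballot_monotone f"
  shows "\<exists>h :: nat \<Rightarrow> nat \<Rightarrow> real. \<forall>(A :: 'c set) (ax :: 'c list). is_ballot A \<and> ax \<in> axes \<and> \<not> is_interval A ax \<longrightarrow>
            g (approval_vector A ax) = h (card A) (card (interfering A ax))"
proof -
  interpret monotone_scoring g f
    by unfold_locales (fact g_nonneg g_zero g_rev f_scoring mono)+
  show ?thesis
  proof (intro exI allI impI)
    fix A :: "'c set" and ax :: "'c list"
    assume "is_ballot A \<and> ax \<in> axes \<and> \<not> is_interval A ax"
    then have ax: "is_axis ax" and "\<not> is_interval A ax" unfolding axes_def by auto
    then have nc: "\<not> contiguous_ones (approval_vector A ax)"
      using contiguous_approval_vector_iff[OF ax] by simp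
    have len: "length (approval_vector A ax) = card (UNIV :: 'c set)" using length_axis[OF ax] by simp
    show "g (approval_vector A ax)
        = g (canonical_vector (card (UNIV :: 'c set)) (card A) (card (interfering A ax)))"
      unfolding g_eq_canonical_vector[OF len nc] len card_ones_approval_vector[OF ax]
        card_interior_zeros_approval_vector[OF ax] ..
  qed
qed

end
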